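(* Assume Assumption A1(2) and Assumption A2 (see context). Let $(\eta_s)_{s\ge 1}$ be a nonincreasing sequence of step sizes with $0<\eta_s\le \eta_{\infty,2}$ for all $s$, and let $(H_s)_{s\ge1}$ be a nondecreasing sequence of positive integers. Then for every $t\ge 1$ the FedLSA iterate $\theta_t$ satisfies \[ \mathbb{E}^{1/2}\big[\|\theta_t-\theta_\star\|^2\big]\le \prod_{s=1}^t(1-\eta_s a)^{H_s}\|\theta_0-\theta_\star\| + \zeta_1\zeta_2\sum_{s=1}^t\eta_s^2H_s^2\exp\Big(-a\sum_{i=s+1}^t\eta_iH_i\Big) +\frac{\bar\sigma_\varepsilon+2\bar\sigma_{\mathrm{het}}}{\sqrt N}\sqrt{\sum_{s=1}^t\eta_s^2H_s\exp\Big(-2a\sum_{r=s+1}^t\eta_rH_r\Big)} +\sqrt{\frac{4\bar\sigma_{\mathbf A}^2\zeta_1^2\zeta_2^2}{N a e}}\sqrt{\sum_{s=1}^t\eta_s^5H_s^4\exp\Big(-a\sum_{r=s+1}^t\eta_rH_r\Big)}. \]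
   Context: Setting (federated linear stochastic approximation). Fix integers $N\ge1$ (number of agents) and $d\ge1$. For each agent $c\in\{1,\dots,N\}$ there is a probability distribution $\pi_c$ on a measurable space $(\mathsf Z,\mathcal Z)$ and measurable maps $z\mapsto \mathbf A^c(z)\in\mathbb R^{d\times d}$, $z\mapsto \mathbf b^c(z)\in\mathbb R^d$; set $\bar{\mathbf A}^c=\mathbb E_{Z\sim\pi_c}[\mathbf A^c(Z)]$, $\bar{\mathbf b}^c=\mathbb E_{Z\sim\pi_c}[\mathbf b^c(Z)]$, $\bar{\mathbf A}=N^{-1}\sum_c\bar{\mathbf A}^c$, $\bar{\mathbf b}=N^{-1}\sum_c\bar{\mathbf b}^c$. Let $\theta_\star$ solve $\bar{\mathbf A}\theta_\star=\bar{\mathbf b}$ and $\theta_\star^c$ solve $\bar{\mathbf A}^c\theta^c_\star=\bar{\mathbf b}^c$. Write $\tilde{\mathbf A}^c(z)=\mathbf A^c(z)-\bar{\mathbf A}^c$, $\tilde{\mathbf b}^c(z)=\mathbf b^c(z)-\bar{\mathbf b}^c$, $\varepsilon^c(z)=\tilde{\mathbf A}^c(z)\theta^c_\star-\tilde{\mathbf b}^c(z)$. Norms are Euclidean / operator norms. Assumption A1(p) ($p\ge1$): for each $c$, $-\bar{\mathbf A}^c$ is Hurwitz, and there are constants $a>0$, $\eta_{\infty,p}>0$ with $\eta_{\infty,p}a\le 1/2$ such that for all $0<\eta<\eta_{\infty,p}$ and $u\in\mathbb R^d$, $\mathbb E^{1/p}_{Z\sim\pi_c}[\|(I-\eta\mathbf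 A^c(Z))u\|^p]\le(1-\eta a)\|u\|$. Assumption A2: all samples $Z^c_{t,h}$ ($t\ge1$, $1\le h\le H_t$, $c\in[N]$) are independent with $Z^c_{t,h}\sim\pi_c$; moreover $\|\varepsilon\|_\infty:=\max_c\sup_z\|\varepsilon^c(z)\|<\infty$ and $C_A:=\max_c\sup_z\max(\|\mathbf A^c(z)\|,\|\tilde{\mathbf A}^c(z)\|)<\infty$. FedLSA: given step sizes $\eta_t>0$, local step numbers $H_t\in\mathbb N$ and $\theta_0\in\mathbb R^d$, for $t\ge1$ each agent sets $\theta^c_{t,0}=\theta_{t-1}$, $\theta^c_{t,h}=\theta^c_{t,h-1}-\eta_t(\mathbf A^c(Z^c_{t,h})\theta^c_{t,h-1}-\mathbf b^c(Z^c_{t,h}))$ for $h=1,\dots,H_t$, and $\theta_t=N^{-1}\sum_{c=1}^N\theta^c_{t,H_t}$. Heterogeneity and variance quantities: $\zeta_1^2=N^{-1}\sum_c\|\bar{\mathbf A}^c(\theta^c_\star-\theta_\star)\|^2$, $\zeta_2^2=N^{-1}\sum_c\|\bar{\mathbf A}^c-\bar{\mathbf A}\|^2$; $\Sigma^c_{\mathbf A}=\mathbb E_{Z\sim\pi_c}[\tilde{\mathbf A}^c(Z)^\top\tilde{\mathbf A}^c(Z)]$, $\Sigma^c_\varepsilon=\mathbb E_{Z\sim\pi_c}[\varepsilon^c(Z)\varepsilon^c(Z)^\top]$; $\bar\sigma_\varepsilon^2=N^{-1}\sum_c\mathrm{Tr}(\Sigma_\varepsilon^c)$, $\bar\sigma_{\mathrm{het}}^2=N^{-1}\sum_c\|\Sigma^c_{\mathbf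 A}\|\,\|\theta^c_\star-\theta_\star\|^2$, $\bar\sigma_{\mathbf A}^2=N^{-1}\sum_c\|\Sigma_{\mathbf A}^c\|^2$. *)

theory Defs
  imports "HOL-Probability.Probability"
begin

text \<open>Operator norm of a square matrix (induced by the Euclidean norm).
  Note: the built-in norm on real^'n^'n is the Frobenius norm, hence this definition.\<close>
definition opnorm :: "real^'n^'n \<Rightarrow> real" where
  "opnorm M = onorm (\<lambda>x. M *v x)"

definition hurwitz :: "real^'n^'n \<Rightarrow> bool" where
  "hurwitz M \<longleftrightarrow>
     (\<forall>ev::complex. det (mat ev - (\<chi> i j. complex_of_real (M $ i $ j))) = 0 \<longrightarrow> Re ev < 0)"

primrec local_run ::
  "('z \<Rightarrow> real^'d^'d) \<Rightarrow> ('z \<Rightarrow> real^'d) \<Rightarrow> real \<Rightarrow> (nat \<Rightarrow> 'z) \<Rightarrow> real^'d \<Rightarrow> nat \<Rightarrow> real^'d" where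
  "local_run Ac bc et zs th 0 = th"
| "local_run Ac bc et zs th (Suc h) =
     local_run Ac bc et zs th h - et *\<^sub>R (Ac (zs (Suc h)) *v local_run Ac bc et zs th h - bc (zs (Suc h)))"

primrec fedlsa ::
  "nat \<Rightarrow> (nat \<Rightarrow> 'z \<Rightarrow> real^'d^'d) \<Rightarrow> (nat \<Rightarrow> 'z \<Rightarrow> real^'d) \<Rightarrow> (nat \<Rightarrow> real) \<Rightarrow> (nat \<Rightarrow> nat)
    \<Rightarrow> real^'d \<Rightarrow> (nat \<Rightarrow> nat \<Rightarrow> nat \<Rightarrow> 'z) \<Rightarrow> nat \<Rightarrow> real^'d" where
  "fedlsa N A b eta H theta0 z 0 = theta0"
| "fedlsa N A b eta H theta0 z (Suc t) =
     (1 / real N) *\<^sub>R (\<Sum>c<N. local_run (A c) (b c) (eta (Suc t)) (z c (Suc t))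
                              (fedlsa N A b eta H theta0 z t) (H (Suc t)))"

end

theory Submission
  imports Defs
begin

(*
  Write e_t = theta_t - theta_star. Averaging the agents' local runs gives the affine recursion
  e_t = G_t e_(t-1) + D_t + W_t, where G_t is the average of the agents' products of random step
  matrices (I - eta_t A(Z)), D_t is a deterministic drift caused by heterogeneity, and W_t is a
  centred noise. Both G_t and W_t depend only on the samples of round t, hence are independent of
  e_(t-1), and A1 gives E |G_t v|^2 <= rho_t^2 |v|^2 with rho_t = (1 - eta_t a)^H_t.
  Splitting e_t into the part driven by e_0 and D and the part driven by W, Minkowski's inequality
  bounds the first, while for the second every cross term vanishes by independence, so its second
  moment is the rho^2-weighted sum of the E |W_s|^2. The drift is of order eta^2 H^2 zeta_1 zeta_2
  because the agents' mean runs (I - eta Abar_c)^H (theta_star - theta_c) cancel to first order.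
*)

lemma abs_matrix_entry_le_norm: "\<bar>(A::real^'n^'m) $ i $ j\<bar> \<le> norm A"
  using component_le_norm_cart[of "A $ i" j] Finite_Cartesian_Product.norm_nth_le[of A i]
  by linarith

lemma norm_le_sum_abs_matrix_entries: "norm (A::real^'n^'m) \<le> (\<Sum>i\<in>UNIV. \<Sum>j\<in>UNIV. \<bar>A $ i $ j\<bar>)"
proof -
  have "norm A \<le> (\<Sum>i\<in>UNIV. norm (A $ i))"
    by (simp add: norm_vec_def L2_set_le_sum)
  also have "\<dots> \<le> (\<Sum>i\<in>UNIV. \<Sum>j\<in>UNIV. \<bar>A $ i $ j\<bar>)"
    by (intro sum_mono) (simp add: norm_le_l1_cart)
  finally show ?thesis .
qed

lemma bounded_bilinear_matrix_vector_mult [bounded_bilinear]: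
  "bounded_bilinear ((*v) :: real^'n^'m \<Rightarrow> real^'n \<Rightarrow> real^'m)"
proof (rule bounded_bilinear.intro)
  show "\<exists>K. \<forall>A x. norm ((A::real^'n^'m) *v x) \<le> norm A * norm x * K"
  proof (intro exI allI)
    fix A :: "real^'n^'m" and x :: "real^'n"
    have "norm (A *v x) \<le> onorm ((*v) A) * norm x"
      by (rule onorm) simp
    also have "onorm ((*v) A) \<le> real CARD('m) * real CARD('n) * norm A"
      by (rule onorm_le_matrix_component) (rule abs_matrix_entry_le_norm)
    finally show "norm (A *v x) \<le> norm A * norm x * (real CARD('m) * real CARD('n))"
      by (simp add: mult_right_mono algebra_simps)
  qed
qed (simp_all add: matrix_vector_mult_add_rdistrib matrix_vector_right_distrib
       scaleR_matrix_vector_assoc matrix_vector_mult_scaleR)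

lemma bounded_bilinear_matrix_matrix_mult [bounded_bilinear]:
  "bounded_bilinear ((**) :: real^'n^'m \<Rightarrow> real^'k^'n \<Rightarrow> real^'k^'m)"
proof (rule bounded_bilinear.intro)
  show "\<exists>K. \<forall>A B. norm ((A::real^'n^'m) ** (B::real^'k^'n)) \<le> norm A * norm B * K"
  proof (intro exI allI)
    fix A :: "real^'n^'m" and B :: "real^'k^'n"
    have entry: "\<bar>(A ** B) $ i $ k\<bar> \<le> real CARD('n) * (norm A * norm B)" for i k
    proof -
      have "\<bar>(A ** B) $ i $ k\<bar> \<le> (\<Sum>j\<in>UNIV. \<bar>A $ i $ j\<bar> * \<bar>B $ j $ k\<bar>)"
        unfolding matrix_matrix_mult_def by (simp add: sum_abs[THEN order_trans] abs_mult)
      also have "\<dots> \<le> (\<Sum>j\<in>(UNIV::'n set). norm A * norm B)"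
        by (intro sum_mono mult_mono abs_matrix_entry_le_norm) auto
      finally show ?thesis by simp
    qed
    have "norm (A ** B) \<le> (\<Sum>i\<in>(UNIV::'m set). \<Sum>k\<in>(UNIV::'k set). real CARD('n) * (norm A * norm B))"
      by (rule order_trans[OF norm_le_sum_abs_matrix_entries]) (intro sum_mono entry)
    then show "norm (A ** B) \<le> norm A * norm B * (real CARD('m) * real CARD('k) * real CARD('n))"
      by (simp add: algebra_simps)
  qed
next
  show "(A + A') ** B = A ** B + A' ** B" for A A' :: "real^'n^'m" and B :: "real^'k^'n"
    by (vector matrix_matrix_mult_def sum.distrib[symmetric] field_simps)
qed (simp_all add: matrix_add_ldistrib scalar_matrix_assoc matrix_scalar_ac)

lemma bounded_linear_transpose [bounded_linear]:
  "bounded_linear (transpose :: real^'n^'m \<Rightarrow> real^'m^'n)"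
  unfolding linear_conv_bounded_linear[symmetric]
  by (rule linearI) (simp_all add: transpose_def vec_eq_iff)

lemma borel_measurable_matrix_vector_mult [measurable (raw)]:
  fixes f :: "'a \<Rightarrow> real^'n^'m" and g :: "'a \<Rightarrow> real^'n"
  assumes "f \<in> borel_measurable M" "g \<in> borel_measurable M"
  shows "(\<lambda>x. f x *v g x) \<in> borel_measurable M"
  using assms by (rule borel_measurable_continuous_Pair) (intro continuous_intros)

lemma borel_measurable_matrix_matrix_mult [measurable (raw)]:
  fixes f :: "'a \<Rightarrow> real^'n^'m" and g :: "'a \<Rightarrow> real^'k^'n"
  assumes "f \<in> borel_measurable M" "g \<in> borel_measurable M"
  shows "(\<lambda>x. f x ** g x) \<in> borel_measurable M"
  using assms by (rule borel_measurable_continuous_Pair) (intro continuous_intros)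

lemma borel_measurable_transpose [measurable (raw)]:
  fixes f :: "'a \<Rightarrow> real^'n^'m"
  assumes "f \<in> borel_measurable M"
  shows "(\<lambda>x. transpose (f x)) \<in> borel_measurable M"
  by (rule borel_measurable_continuous_on[OF _ assms]) (intro continuous_intros)

lemma matrix_vector_mult_uminus_left [simp]: "(- (A::real^'n^'m)) *v v = - (A *v v)"
  by (simp add: matrix_vector_mult_def sum_negf vec_eq_iff)

lemma matrix_vector_mult_sum_left: "(\<Sum>c\<in>I. (B c :: real^'n^'m)) *v v = (\<Sum>c\<in>I. B c *v v)"
  by (induction I rule: infinite_finite_induct) (simp_all add: matrix_vector_mult_add_rdistrib)

lemma matrix_vector_mult_sum_right: "(B::real^'n^'m) *v (\<Sum>c\<in>I. v c) = (\<Sum>c\<in>I. B *v v c)"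
  by (induction I rule: infinite_finite_induct) (simp_all add: matrix_vector_right_distrib)

lemma inner_matrix_vector_mult_left: "((G::real^'n^'m) *v v) \<bullet> w = v \<bullet> (transpose G *v w)"
  by (metis dot_lmul_matrix inner_commute transpose_matrix_vector)

lemma bounded_linear_matrix_vector_mult_left: "bounded_linear (\<lambda>A::real^'n^'m. A *v v)"
  by (rule bounded_bilinear.bounded_linear_left[OF bounded_bilinear_matrix_vector_mult])

lemma opnorm_nonneg: "0 \<le> opnorm (B::real^'n^'n)"
  unfolding opnorm_def by (rule onorm_pos_le) simp

lemma norm_matrix_vector_mult_le_opnorm: "norm ((B::real^'n^'n) *v v) \<le> opnorm B * norm v"
  unfolding opnorm_def by (rule onorm) simp

lemma bounded_image_if_opnorm_le:
  fixes f :: "'a \<Rightarrow> real^'n^'n"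
  assumes "\<And>x. x \<in> S \<Longrightarrow> opnorm (f x) \<le> C"
  shows "bounded (f ` S)"
proof -
  have "norm (f x) \<le> real CARD('n) * (real CARD('n) * C)" if "x \<in> S" for x
  proof -
    have "\<bar>f x $ i $ j\<bar> \<le> C" for i j
      using matrix_component_le_onorm[of "f x" i j] assms[OF that] by (simp add: opnorm_def)
    then have "(\<Sum>i\<in>UNIV. \<Sum>j\<in>UNIV. \<bar>f x $ i $ j\<bar>) \<le> (\<Sum>i\<in>(UNIV::'n set). \<Sum>j\<in>(UNIV::'n set). C)"
      by (intro sum_mono)
    then show ?thesis
      using norm_le_sum_abs_matrix_entries[of "f x"] by simp
  qed
  then show ?thesis
    unfolding bounded_iff by blast
qed


lemma bounded_const_image [simp]: "bounded ((\<lambda>x. c) ` S)"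
  by (rule bounded_subset[of "{c}"]) auto

lemma (in bounded_bilinear) bounded_comp:
  assumes "bounded (f ` S)" "bounded (g ` S)"
  shows "bounded ((\<lambda>x. prod (f x) (g x)) ` S)"
proof -
  obtain K where K: "\<And>a b. norm (prod a b) \<le> norm a * norm b * K" "0 \<le> K"
    using nonneg_bounded by blast
  obtain B C where B: "\<And>x. x \<in> S \<Longrightarrow> norm (f x) \<le> B" and C: "\<And>x. x \<in> S \<Longrightarrow> norm (g x) \<le> C"
    using assms by (auto simp: bounded_iff)
  have "norm (prod (f x) (g x)) \<le> B * C * K" if "x \<in> S" for x
    using K B[OF that] C[OF that]
    by (smt (verit) mult_mono mult_right_mono norm_ge_zero)
  then show ?thesis
    unfolding bounded_iff by blast
qed

lemma (in bounded_linear) bounded_comp: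
  "bounded (g ` S) \<Longrightarrow> bounded ((\<lambda>x. f (g x)) ` S)"
  using bounded_linear_image[OF _ bounded_linear_axioms, of "g ` S"] by (simp add: image_image)

lemma bounded_sum_comp:
  fixes f :: "'i \<Rightarrow> 'a \<Rightarrow> 'b::real_normed_vector"
  assumes "\<And>i. i \<in> I \<Longrightarrow> bounded (f i ` S)"
  shows "bounded ((\<lambda>x. \<Sum>i\<in>I. f i x) ` S)"
  using assms
proof (induction I rule: infinite_finite_induct)
  case (insert i I)
  then show ?case by (simp add: bounded_plus_comp)
qed simp_all

lemma bounded_power2_comp:
  fixes f :: "'a \<Rightarrow> real"
  shows "bounded (f ` S) \<Longrightarrow> bounded ((\<lambda>x. (f x)\<^sup>2) ` S)"
  unfolding power2_eq_square by (rule bounded_bilinear.bounded_comp[OF bounded_bilinear_mult])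

lemmas bounded_comp_intros =
  bounded_const_image bounded_plus_comp bounded_minus_comp bounded_sum_comp
  bounded_power2_comp bounded_norm_comp[THEN iffD2]
  bounded_linear.bounded_comp[OF bounded_linear_transpose]
  bounded_bilinear.bounded_comp[OF bounded_bilinear_scaleR]
  bounded_bilinear.bounded_comp[OF bounded_bilinear_inner]
  bounded_bilinear.bounded_comp[OF bounded_bilinear_matrix_vector_mult]
  bounded_bilinear.bounded_comp[OF bounded_bilinear_matrix_matrix_mult]

lemma (in finite_measure) integrable_bounded_image:
  fixes f :: "'a \<Rightarrow> 'b::{banach, second_countable_topology}"
  assumes "f \<in> borel_measurable M" "bounded (f ` space M)"
  shows "integrable M f"
proof -
  obtain B where "\<And>x. x \<in> space M \<Longrightarrow> norm (f x) \<le> B"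
    using assms(2) by (auto simp: bounded_iff)
  then show ?thesis
    using assms(1) by (intro integrable_const_bound[where B=B] AE_I2)
qed


section \<open>Second moments\<close>

abbreviation L2_norm :: "'a measure \<Rightarrow> ('a \<Rightarrow> 'b::real_normed_vector) \<Rightarrow> real" where
  "L2_norm M X \<equiv> sqrt (\<integral>\<omega>. (norm (X \<omega>))\<^sup>2 \<partial>M)"

lemma integral_mult_eq_0_if_integral_square_eq_0:
  fixes f g :: "'a \<Rightarrow> real"
  assumes "integrable M (\<lambda>x. (f x)\<^sup>2)" "(\<integral>x. (f x)\<^sup>2 \<partial>M) = 0" "integrable M (\<lambda>x. f x * g x)"
  shows "(\<integral>x. f x * g x \<partial>M) = 0"
proof -
  have "AE x in M. (f x)\<^sup>2 = 0"
    using assms(1,2) integral_nonneg_eq_0_iff_AE[of M "\<lambda>x. (f x)\<^sup>2"] by simp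
  then have "AE x in M. f x * g x = 0"
    by eventually_elim simp
  then show ?thesis
    using integral_cong_AE[of "\<lambda>x. f x * g x" M "\<lambda>_. 0"] assms(3) by (simp add: borel_measurable_integrable)
qed

lemma Cauchy_Schwarz_integral:
  fixes f g :: "'a \<Rightarrow> real"
  assumes f2: "integrable M (\<lambda>x. (f x)\<^sup>2)" and g2: "integrable M (\<lambda>x. (g x)\<^sup>2)"
    and fg: "integrable M (\<lambda>x. f x * g x)"
  shows "(\<integral>x. f x * g x \<partial>M) \<le> sqrt (\<integral>x. (f x)\<^sup>2 \<partial>M) * sqrt (\<integral>x. (g x)\<^sup>2 \<partial>M)"
proof -
  define \<alpha> where "\<alpha> = sqrt (\<integral>x. (f x)\<^sup>2 \<partial>M)"
  define \<beta> where "\<beta> = sqrt (\<integral>x. (g x)\<^sup>2 \<partial>M)"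
  have \<alpha>2: "\<alpha>\<^sup>2 = (\<integral>x. (f x)\<^sup>2 \<partial>M)" and \<beta>2: "\<beta>\<^sup>2 = (\<integral>x. (g x)\<^sup>2 \<partial>M)"
    by (simp_all add: \<alpha>_def \<beta>_def)
  have "0 \<le> \<alpha>" "0 \<le> \<beta>"
    unfolding \<alpha>_def \<beta>_def by (intro real_sqrt_ge_zero integral_nonneg_AE; simp)+
  then consider "\<alpha> = 0" | "\<beta> = 0" | "0 < \<alpha>" "0 < \<beta>"
    by fastforce
  then show ?thesis
  proof cases
    case 1
    then show ?thesis
      using integral_mult_eq_0_if_integral_square_eq_0[OF f2 _ fg] \<alpha>2 by (simp add: \<alpha>_def \<beta>_def)
  next
    case 2
    then show ?thesis
      using integral_mult_eq_0_if_integral_square_eq_0[of M g f] g2 fg \<beta>2 by (simp add: \<alpha>_def \<beta>_def mult.commute)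
  next
    case 3
    have "2 * (\<alpha> * \<beta>) * (f x * g x) \<le> \<beta>\<^sup>2 * (f x)\<^sup>2 + \<alpha>\<^sup>2 * (g x)\<^sup>2" for x
    proof -
      have "(\<beta> * f x - \<alpha> * g x)\<^sup>2 = \<beta>\<^sup>2 * (f x)\<^sup>2 + \<alpha>\<^sup>2 * (g x)\<^sup>2 - 2 * (\<alpha> * \<beta>) * (f x * g x)"
        by (simp add: power2_eq_square algebra_simps)
      then show ?thesis
        using zero_le_power2[of "\<beta> * f x - \<alpha> * g x"] by linarith
    qed
    then have "(\<integral>x. 2 * (\<alpha> * \<beta>) * (f x * g x) \<partial>M) \<le> (\<integral>x. \<beta>\<^sup>2 * (f x)\<^sup>2 + \<alpha>\<^sup>2 * (g x)\<^sup>2 \<partial>M)"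
      using f2 g2 fg by (intro integral_mono) auto
    also have "\<dots> = \<beta>\<^sup>2 * \<alpha>\<^sup>2 + \<alpha>\<^sup>2 * \<beta>\<^sup>2"
      using f2 g2 by (simp add: \<alpha>2 \<beta>2)
    also have "\<dots> = 2 * (\<alpha> * \<beta>) * (\<alpha> * \<beta>)"
      by (simp add: power2_eq_square)
    finally have "2 * (\<alpha> * \<beta>) * (\<integral>x. f x * g x \<partial>M) \<le> 2 * (\<alpha> * \<beta>) * (\<alpha> * \<beta>)"
      by simp
    then show ?thesis
      using 3 by (simp add: \<alpha>_def[symmetric] \<beta>_def[symmetric])
  qed
qed

lemma integrable_norm_sq_add:
  fixes X Y :: "'a \<Rightarrow> 'b::{real_normed_vector, second_countable_topology}"
  assumes [measurable]: "X \<in> borel_measurable M" "Y \<in> borel_measurable M"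
    and "integrable M (\<lambda>\<omega>. (norm (X \<omega>))\<^sup>2)" "integrable M (\<lambda>\<omega>. (norm (Y \<omega>))\<^sup>2)"
  shows "integrable M (\<lambda>\<omega>. (norm (X \<omega> + Y \<omega>))\<^sup>2)"
proof (rule Bochner_Integration.integrable_bound)
  show "integrable M (\<lambda>\<omega>. 2 * (norm (X \<omega>))\<^sup>2 + 2 * (norm (Y \<omega>))\<^sup>2)"
    using assms(3,4) by simp
  have "(norm (X \<omega> + Y \<omega>))\<^sup>2 \<le> 2 * (norm (X \<omega>))\<^sup>2 + 2 * (norm (Y \<omega>))\<^sup>2" for \<omega>
    using norm_triangle_ineq[of "X \<omega>" "Y \<omega>"] sum_squares_ge_zero[of "norm (X \<omega>) - norm (Y \<omega>)" 0]
    by (smt (verit) norm_ge_zero power_mono power2_sum power2_diff)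
  then show "AE \<omega> in M. norm ((norm (X \<omega> + Y \<omega>))\<^sup>2) \<le> norm (2 * (norm (X \<omega>))\<^sup>2 + 2 * (norm (Y \<omega>))\<^sup>2)"
    by simp
qed measurable

lemma L2_norm_add_le:
  fixes X Y :: "'a \<Rightarrow> 'b::{real_normed_vector, second_countable_topology}"
  assumes [measurable]: "X \<in> borel_measurable M" "Y \<in> borel_measurable M"
    and X2: "integrable M (\<lambda>\<omega>. (norm (X \<omega>))\<^sup>2)" and Y2: "integrable M (\<lambda>\<omega>. (norm (Y \<omega>))\<^sup>2)"
  shows "L2_norm M (\<lambda>\<omega>. X \<omega> + Y \<omega>) \<le> L2_norm M X + L2_norm M Y"
proof -
  have XY: "integrable M (\<lambda>\<omega>. norm (X \<omega>) * norm (Y \<omega>))"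
  proof (rule Bochner_Integration.integrable_bound)
    show "integrable M (\<lambda>\<omega>. (norm (X \<omega>))\<^sup>2 + (norm (Y \<omega>))\<^sup>2)"
      using X2 Y2 by simp
    have "norm (X \<omega>) * norm (Y \<omega>) \<le> (norm (X \<omega>))\<^sup>2 + (norm (Y \<omega>))\<^sup>2" for \<omega>
    proof -
      have "2 * (norm (X \<omega>) * norm (Y \<omega>)) \<le> (norm (X \<omega>))\<^sup>2 + (norm (Y \<omega>))\<^sup>2"
        using sum_squares_bound[of "norm (X \<omega>)" "norm (Y \<omega>)"] by (simp add: mult.assoc)
      moreover have "0 \<le> norm (X \<omega>) * norm (Y \<omega>)"
        by simp
      ultimately show ?thesis
        by linarith
    qed
    then show "AE \<omega> in M. norm (norm (X \<omega>) * norm (Y \<omega>)) \<le> norm ((norm (X \<omega>))\<^sup>2 + (norm (Y \<omega>))\<^sup>2)"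
      by (simp add: abs_mult)
  qed measurable
  have "(\<integral>\<omega>. (norm (X \<omega> + Y \<omega>))\<^sup>2 \<partial>M) \<le> (\<integral>\<omega>. (norm (X \<omega>))\<^sup>2 + 2 * (norm (X \<omega>) * norm (Y \<omega>)) + (norm (Y \<omega>))\<^sup>2 \<partial>M)"
  proof (intro integral_mono)
    fix \<omega>
    show "(norm (X \<omega> + Y \<omega>))\<^sup>2 \<le> (norm (X \<omega>))\<^sup>2 + 2 * (norm (X \<omega>) * norm (Y \<omega>)) + (norm (Y \<omega>))\<^sup>2"
      using power_mono[OF norm_triangle_ineq[of "X \<omega>" "Y \<omega>"] norm_ge_zero, of 2]
      by (simp add: power2_sum mult.assoc)
  qed (use X2 Y2 XY integrable_norm_sq_add[of X M Y] in auto)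
  also have "\<dots> = (L2_norm M X)\<^sup>2 + 2 * (\<integral>\<omega>. norm (X \<omega>) * norm (Y \<omega>) \<partial>M) + (L2_norm M Y)\<^sup>2"
    using X2 Y2 XY by simp
  also have "\<dots> \<le> (L2_norm M X)\<^sup>2 + 2 * (L2_norm M X * L2_norm M Y) + (L2_norm M Y)\<^sup>2"
    using Cauchy_Schwarz_integral[of M "\<lambda>\<omega>. norm (X \<omega>)" "\<lambda>\<omega>. norm (Y \<omega>)"] X2 Y2 XY by simp
  also have "\<dots> = (L2_norm M X + L2_norm M Y)\<^sup>2"
    by (simp add: power2_sum)
  finally show ?thesis
    by (simp add: real_le_lsqrt)
qed

lemma integrable_norm_sq_sum:
  fixes X :: "'i \<Rightarrow> 'a \<Rightarrow> 'b::{real_normed_vector, second_countable_topology}"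
  assumes "\<And>i. i \<in> I \<Longrightarrow> X i \<in> borel_measurable M"
    and "\<And>i. i \<in> I \<Longrightarrow> integrable M (\<lambda>\<omega>. (norm (X i \<omega>))\<^sup>2)"
  shows "integrable M (\<lambda>\<omega>. (norm (\<Sum>i\<in>I. X i \<omega>))\<^sup>2)"
  using assms
  by (induction I rule: infinite_finite_induct) (auto intro!: integrable_norm_sq_add borel_measurable_sum)

lemma L2_norm_sum_le:
  fixes X :: "'i \<Rightarrow> 'a \<Rightarrow> 'b::{real_normed_vector, second_countable_topology}"
  assumes "\<And>i. i \<in> I \<Longrightarrow> X i \<in> borel_measurable M"
    and "\<And>i. i \<in> I \<Longrightarrow> integrable M (\<lambda>\<omega>. (norm (X i \<omega>))\<^sup>2)"
  shows "L2_norm M (\<lambda>\<omega>. \<Sum>i\<in>I. X i \<omega>) \<le> (\<Sum>i\<in>I. L2_norm M (X i))"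
  using assms
proof (induction I rule: infinite_finite_induct)
  case (insert j I)
  then have "L2_norm M (\<lambda>\<omega>. X j \<omega> + (\<Sum>i\<in>I. X i \<omega>)) \<le> L2_norm M (X j) + L2_norm M (\<lambda>\<omega>. \<Sum>i\<in>I. X i \<omega>)"
    by (intro L2_norm_add_le integrable_norm_sq_sum borel_measurable_sum) auto
  then show ?case
    using insert by simp
qed simp_all

lemma second_moment_le_if_L2_norm_le:
  assumes "L2_norm M X \<le> r"
  shows "(\<integral>\<omega>. (norm (X \<omega>))\<^sup>2 \<partial>M) \<le> r\<^sup>2"
  using power_mono[OF assms real_sqrt_ge_zero, of 2] by (simp add: integral_nonneg_AE)

lemma L2_norm_scaleR: "L2_norm M (\<lambda>\<omega>. c *\<^sub>R X \<omega>) = \<bar>c\<bar> * L2_norm M X"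
  by (simp add: power_mult_distrib real_sqrt_mult)

context prob_space
begin

lemma norm_integral_le_L2_norm:
  fixes f :: "'a \<Rightarrow> 'b::{banach, second_countable_topology}"
  assumes "integrable M f" "integrable M (\<lambda>x. (norm (f x))\<^sup>2)"
  shows "norm (\<integral>x. f x \<partial>M) \<le> L2_norm M f"
proof -
  have "norm (\<integral>x. f x \<partial>M) \<le> (\<integral>x. norm (f x) * 1 \<partial>M)"
    using integral_norm_bound by simp
  also have "\<dots> \<le> L2_norm M f * sqrt (\<integral>x. 1\<^sup>2 \<partial>M)"
    using assms by (intro Cauchy_Schwarz_integral) auto
  finally show ?thesis
    by (simp add: prob_space)
qed

lemma second_moment_step_eq:
  fixes A :: "'a \<Rightarrow> real^'n^'n"
  assumes [measurable]: "A \<in> borel_measurable M" and bounded: "bounded (A ` space M)"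
  shows "(\<integral>z. (norm ((mat 1 - x *\<^sub>R A z) *v u))\<^sup>2 \<partial>M)
    = (norm u)\<^sup>2 - 2 * x * (\<integral>z. u \<bullet> (A z *v u) \<partial>M) + x\<^sup>2 * (\<integral>z. (norm (A z *v u))\<^sup>2 \<partial>M)"
proof -
  have integrable: "integrable M (\<lambda>z. u \<bullet> (A z *v u))" "integrable M (\<lambda>z. (norm (A z *v u))\<^sup>2)"
    using bounded by (auto intro!: integrable_bounded_image bounded_comp_intros)
  have pointwise: "(norm ((mat 1 - x *\<^sub>R A z) *v u))\<^sup>2
      = (norm u)\<^sup>2 - 2 * x * (u \<bullet> (A z *v u)) + x\<^sup>2 * (norm (A z *v u))\<^sup>2" for z
  proof -
    have step: "(mat 1 - x *\<^sub>R A z) *v u = u - x *\<^sub>R (A z *v u)"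
      by (simp add: matrix_vector_mult_diff_rdistrib scaleR_matrix_vector_assoc[symmetric])
    have "(norm (u - x *\<^sub>R w))\<^sup>2 = (norm u)\<^sup>2 - 2 * x * (u \<bullet> w) + x\<^sup>2 * (norm w)\<^sup>2" for w :: "real^'n"
      unfolding power2_norm_eq_inner
      by (simp add: inner_diff_left inner_diff_right inner_commute power2_eq_square algebra_simps)
    then show ?thesis
      unfolding step .
  qed
  have "(\<integral>z. (norm ((mat 1 - x *\<^sub>R A z) *v u))\<^sup>2 \<partial>M)
      = (\<integral>z. (norm u)\<^sup>2 - 2 * x * (u \<bullet> (A z *v u)) + x\<^sup>2 * (norm (A z *v u))\<^sup>2 \<partial>M)"
    by (rule Bochner_Integration.integral_cong[OF refl pointwise])
  also have "\<dots> = (norm u)\<^sup>2 - 2 * x * (\<integral>z. u \<bullet> (A z *v u) \<partial>M) + x\<^sup>2 * (\<integral>z. (norm (A z *v u))\<^sup>2 \<partial>M)"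
    using integrable by (simp add: prob_space)
  finally show ?thesis .
qed

text \<open>The second moment is a quadratic polynomial in the step size, so the bound extends by continuity
  from the open interval to its right endpoint.\<close>

lemma second_moment_step_le_closed:
  fixes A :: "'a \<Rightarrow> real^'n^'n"
  assumes [measurable]: "A \<in> borel_measurable M" and bounded: "bounded (A ` space M)"
    and open_interval: "\<And>x. 0 < x \<Longrightarrow> x < \<eta> \<Longrightarrow> L2_norm M (\<lambda>z. (mat 1 - x *\<^sub>R A z) *v u) \<le> (1 - x * a) * norm u"
    and e: "0 < e" "e \<le> \<eta>"
  shows "(\<integral>z. (norm ((mat 1 - e *\<^sub>R A z) *v u))\<^sup>2 \<partial>M) \<le> (1 - e * a)\<^sup>2 * (norm u)\<^sup>2"
proof -
  define \<alpha> where "\<alpha> = (\<integral>z. u \<bullet> (A z *v u) \<partial>M)"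
  define \<beta> where "\<beta> = (\<integral>z. (norm (A z *v u))\<^sup>2 \<partial>M)"
  have expand: "(\<integral>z. (norm ((mat 1 - x *\<^sub>R A z) *v u))\<^sup>2 \<partial>M) = (norm u)\<^sup>2 - 2 * x * \<alpha> + x\<^sup>2 * \<beta>" for x
    unfolding \<alpha>_def \<beta>_def using bounded by (rule second_moment_step_eq[OF assms(1)])
  define q where "q x = (1 - x * a)\<^sup>2 * (norm u)\<^sup>2 - ((norm u)\<^sup>2 - 2 * x * \<alpha> + x\<^sup>2 * \<beta>)" for x
  have nonneg: "0 \<le> q x" if "x \<in> {0<..<\<eta>}" for x
  proof -
    have "(\<integral>z. (norm ((mat 1 - x *\<^sub>R A z) *v u))\<^sup>2 \<partial>M) \<le> ((1 - x * a) * norm u)\<^sup>2"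
      using that by (intro second_moment_le_if_L2_norm_le open_interval) auto
    then show ?thesis
      unfolding q_def expand by (simp add: power_mult_distrib)
  qed
  have "continuous_on UNIV q"
    unfolding q_def by (intro continuous_intros)
  then have "continuous_on (closure {0<..<\<eta>}) q"
    by (rule continuous_on_subset) simp
  moreover have "e \<in> closure {0<..<\<eta>}"
    using e by simp
  ultimately have "0 \<le> q e"
    using nonneg by (rule continuous_ge_on_closure)
  then show ?thesis
    unfolding q_def expand by simp
qed

lemma trace_integral_outer_product:
  fixes f :: "'a \<Rightarrow> real^'n"
  assumes [measurable]: "f \<in> borel_measurable M" and bounded: "bounded (f ` space M)"
  shows "(\<Sum>i\<in>UNIV. (\<integral>z. (\<chi> j k. f z $ j * f z $ k) \<partial>M) $ i $ i) = (\<integral>z. (norm (f z))\<^sup>2 \<partial>M)"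
proof -
  obtain B where B: "\<And>z. z \<in> space M \<Longrightarrow> norm (f z) \<le> B"
    using bounded by (auto simp: bounded_iff)
  have outer_measurable: "(\<lambda>z. \<chi> j k. f z $ j * f z $ k) \<in> borel_measurable M"
    using borel_measurable_continuous_on[OF _ assms(1), of "\<lambda>v::real^'n. \<chi> j k. v $ j * v $ k"]
    by (simp add: continuous_intros)
  have "norm ((\<chi> j k. f z $ j * f z $ k) :: real^'n^'n) \<le> real CARD('n) * (real CARD('n) * (B * B))"
    if z: "z \<in> space M" for z
  proof -
    have "\<bar>f z $ j * f z $ k\<bar> \<le> B * B" for j k
      unfolding abs_mult using B[OF z] component_le_norm_cart[of "f z"]
      by (meson abs_ge_zero mult_mono order_trans)
    then have "(\<Sum>j\<in>UNIV. \<Sum>k\<in>UNIV. \<bar>(\<chi> j k. f z $ j * f z $ k) $ j $ k\<bar>) \<le> (\<Sum>j\<in>(UNIV::'n set). \<Sum>k\<in>(UNIV::'n set). B * B)"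
      by (intro sum_mono) simp
    then show ?thesis
      using norm_le_sum_abs_matrix_entries[of "(\<chi> j k. f z $ j * f z $ k) :: real^'n^'n"] by simp
  qed
  then have outer_integrable: "integrable M (\<lambda>z. (\<chi> j k. f z $ j * f z $ k) :: real^'n^'n)"
    using outer_measurable by (intro integrable_bounded_image) (auto simp: bounded_iff)
  have diagonal: "bounded_linear (\<lambda>x::real^'n^'n. x $ i $ i)" for i
    by (rule bounded_linear_compose[OF bounded_linear_vec_nth bounded_linear_vec_nth])
  have "(\<Sum>i\<in>UNIV. (\<integral>z. (\<chi> j k. f z $ j * f z $ k) \<partial>M) $ i $ i) = (\<Sum>i\<in>UNIV. (\<integral>z. f z $ i * f z $ i \<partial>M))"
    using integral_bounded_linear[OF diagonal outer_integrable] by simp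
  also have "\<dots> = (\<integral>z. (\<Sum>i\<in>UNIV. f z $ i * f z $ i) \<partial>M)"
    using integrable_bounded_linear[OF diagonal outer_integrable] by (simp add: Bochner_Integration.integral_sum)
  also have "\<dots> = (\<integral>z. (norm (f z))\<^sup>2 \<partial>M)"
    by (simp add: power2_norm_eq_inner inner_vec_def)
  finally show ?thesis .
qed

end


section \<open>Independence\<close>

lemma borel_measurable_Pair_iff:
  fixes f :: "'a \<Rightarrow> 'b::second_countable_topology" and g :: "'a \<Rightarrow> 'c::second_countable_topology"
  shows "(\<lambda>x. (f x, g x)) \<in> borel_measurable M \<longleftrightarrow> f \<in> borel_measurable M \<and> g \<in> borel_measurable M"
proof -
  have "(\<lambda>x. (f x, g x)) \<in> borel_measurable M \<longleftrightarrow> (\<lambda>x. (f x, g x)) \<in> measurable M (borel \<Otimes>\<^sub>M borel)"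
    by (simp only: borel_prod)
  then show ?thesis
    by (simp add: measurable_pair_iff comp_def)
qed

context prob_space
begin

lemma indep_var_vimage_algebra:
  assumes ind: "indep_var S1 X1 S2 X2"
    and Y1: "Y1 \<in> measurable (vimage_algebra (space M) X1 S1) N1"
    and Y2: "Y2 \<in> measurable (vimage_algebra (space M) X2 S2) N2"
  shows "indep_var N1 Y1 N2 Y2"
proof -
  have X: "X1 \<in> measurable M S1" "X2 \<in> measurable M S2"
    using ind by (rule indep_var_rv1, rule indep_var_rv2)
  have sets_vimage: "sets (vimage_algebra (space M) Xi Si) = {Xi -` A \<inter> space M | A. A \<in> sets Si}"
    if "Xi \<in> measurable M Si" for Xi :: "'a \<Rightarrow> 'b" and Si
    using that by (intro sets_vimage_algebra2) (auto simp: measurable_def)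
  have measurable_M: "Yi \<in> measurable M Ni"
    if "Xi \<in> measurable M Si" "Yi \<in> measurable (vimage_algebra (space M) Xi Si) Ni"
    for Xi :: "'a \<Rightarrow> 'b" and Si and Yi :: "'a \<Rightarrow> 'c" and Ni
  proof -
    have "sets (vimage_algebra (space M) Xi Si) \<subseteq> sets M"
      using that(1) unfolding sets_vimage[OF that(1)] by (auto intro: measurable_sets)
    then show ?thesis
      using measurable_mono[of Ni Ni "vimage_algebra (space M) Xi Si" M] that(2) by auto
  qed
  have preimage: "Yi -` A \<inter> space M \<in> {Xi -` A \<inter> space M | A. A \<in> sets Si}"
    if "Xi \<in> measurable M Si" "Yi \<in> measurable (vimage_algebra (space M) Xi Si) Ni" "A \<in> sets Ni"
    for Xi :: "'a \<Rightarrow> 'b" and Si and Yi :: "'a \<Rightarrow> 'c" and Ni A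
    using measurable_sets[OF that(2,3)] sets_vimage[OF that(1)] by simp
  have "indep_sets (\<lambda>i. sigma_sets (space M) {case_bool X1 X2 i -` A \<inter> space M |A. A \<in> sets (case_bool S1 S2 i)}) UNIV"
    using ind unfolding indep_var_def indep_vars_def by auto
  then have "indep_sets (\<lambda>i. sigma_sets (space M) {case_bool Y1 Y2 i -` A \<inter> space M |A. A \<in> sets (case_bool N1 N2 i)}) UNIV"
    by (rule indep_sets_mono_sets, intro sigma_sets_subseteq)
       (use preimage[OF X(1) Y1] preimage[OF X(2) Y2] in \<open>auto split: bool.split\<close>)
  then show ?thesis
    unfolding indep_var_def indep_vars_def
    using measurable_M[OF X(1) Y1] measurable_M[OF X(2) Y2] by (auto split: bool.split)
qed

lemma indep_var_integral_iterated:
  fixes F :: "'b \<times> 'b \<Rightarrow> 'c::{banach, second_countable_topology}"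
  assumes ind: "indep_var S X T Y" and F[measurable]: "F \<in> borel_measurable (S \<Otimes>\<^sub>M T)"
    and int: "integrable M (\<lambda>\<omega>. F (X \<omega>, Y \<omega>))"
  shows "(\<integral>\<omega>. F (X \<omega>, Y \<omega>) \<partial>M) = (\<integral>\<omega>. (\<integral>\<omega>'. F (X \<omega>', Y \<omega>) \<partial>M) \<partial>M)"
    and "integrable M (\<lambda>\<omega>. (\<integral>\<omega>'. F (X \<omega>', Y \<omega>) \<partial>M))"
proof -
  have X[measurable]: "X \<in> measurable M S" using ind by (rule indep_var_rv1)
  have Y[measurable]: "Y \<in> measurable M T" using ind by (rule indep_var_rv2)
  interpret PX: prob_space "distr M S X" by (rule prob_space_distr[OF X])
  interpret PY: prob_space "distr M T Y" by (rule prob_space_distr[OF Y])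
  interpret P: pair_sigma_finite "distr M S X" "distr M T Y" ..
  have XY[measurable]: "(\<lambda>x. (X x, Y x)) \<in> measurable M (S \<Otimes>\<^sub>M T)"
    by measurable
  have product: "distr M S X \<Otimes>\<^sub>M distr M T Y = distr M (S \<Otimes>\<^sub>M T) (\<lambda>x. (X x, Y x))"
    using ind indep_var_distribution_eq by auto
  have intP: "integrable (distr M S X \<Otimes>\<^sub>M distr M T Y) (case_prod (\<lambda>x y. F (x, y)))"
    unfolding product using int integrable_distr_eq[OF XY F] by simp
  have inner: "(\<integral>x. F (x, y) \<partial>distr M S X) = (\<integral>\<omega>'. F (X \<omega>', y) \<partial>M)" if "y \<in> space T" for y
    using that by (intro integral_distr) auto
  have g[measurable]: "(\<lambda>y. \<integral>\<omega>'. F (X \<omega>', y) \<partial>M) \<in> borel_measurable T"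
    by measurable
  have "(\<integral>\<omega>. F (X \<omega>, Y \<omega>) \<partial>M) = integral\<^sup>L (distr M S X \<Otimes>\<^sub>M distr M T Y) (case_prod (\<lambda>x y. F (x, y)))"
    unfolding product by (simp add: integral_distr[OF XY F])
  also have "\<dots> = (\<integral>y. (\<integral>x. F (x, y) \<partial>distr M S X) \<partial>distr M T Y)"
    using P.integral_snd[OF intP] by simp
  also have "\<dots> = (\<integral>y. (\<integral>\<omega>'. F (X \<omega>', y) \<partial>M) \<partial>distr M T Y)"
    by (intro Bochner_Integration.integral_cong) (auto simp: inner)
  also have "\<dots> = (\<integral>\<omega>. (\<integral>\<omega>'. F (X \<omega>', Y \<omega>) \<partial>M) \<partial>M)"
    by (rule integral_distr[OF Y g])
  finally show "(\<integral>\<omega>. F (X \<omega>, Y \<omega>) \<partial>M) = (\<integral>\<omega>. (\<integral>\<omega>'. F (X \<omega>', Y \<omega>) \<partial>M) \<partial>M)" .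
  have "integrable (distr M T Y) (\<lambda>y. (\<integral>x. F (x, y) \<partial>distr M S X))"
    using P.integrable_snd[OF intP] by simp
  moreover have "integrable (distr M T Y) (\<lambda>y. (\<integral>\<omega>'. F (X \<omega>', y) \<partial>M)) \<longleftrightarrow>
      integrable (distr M T Y) (\<lambda>y. (\<integral>x. F (x, y) \<partial>distr M S X))"
    by (intro Bochner_Integration.integrable_cong) (auto simp: inner)
  ultimately have "integrable (distr M T Y) (\<lambda>y. (\<integral>\<omega>'. F (X \<omega>', y) \<partial>M))"
    by simp
  then show "integrable M (\<lambda>\<omega>. (\<integral>\<omega>'. F (X \<omega>', Y \<omega>) \<partial>M))"
    using integrable_distr_eq[OF Y g] by simp
qed

text \<open>
  \<^const>\<open>indep_var\<close> only relates random variables with values in a common space, so below the random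
  vector \<open>y\<close>, independent of the pair \<open>(G, W)\<close>, is embedded as \<open>(0, y)\<close>.
\<close>

lemma indep_second_moment_matrix_vector_mult_le:
  fixes G :: "'a \<Rightarrow> real^'n^'n" and W :: "'a \<Rightarrow> real^'n" and y :: "'a \<Rightarrow> real^'n"
  assumes ind: "indep_var borel (\<lambda>\<omega>. (G \<omega>, W \<omega>)) borel (\<lambda>\<omega>. (0, y \<omega>))"
    and bounded: "bounded (G ` space M)" "bounded (y ` space M)"
    and contraction: "\<And>v. (\<integral>\<omega>. (norm (G \<omega> *v v))\<^sup>2 \<partial>M) \<le> \<rho> * (norm v)\<^sup>2"
  shows "(\<integral>\<omega>. (norm (G \<omega> *v y \<omega>))\<^sup>2 \<partial>M) \<le> \<rho> * (\<integral>\<omega>. (norm (y \<omega>))\<^sup>2 \<partial>M)"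
proof -
  have [measurable]: "G \<in> borel_measurable M" "y \<in> borel_measurable M"
    using indep_var_rv1[OF ind] indep_var_rv2[OF ind] by (simp_all add: borel_measurable_Pair_iff)
  let ?F = "\<lambda>pq :: ((real^'n^'n) \<times> (real^'n)) \<times> ((real^'n^'n) \<times> (real^'n)). (norm (fst (fst pq) *v snd (snd pq)))\<^sup>2"
  have F: "?F \<in> borel_measurable (borel \<Otimes>\<^sub>M borel)"
    unfolding borel_prod by (auto intro!: borel_measurable_continuous_onI continuous_intros)
  have int: "integrable M (\<lambda>\<omega>. ?F ((G \<omega>, W \<omega>), (0, y \<omega>)))"
    using bounded by (auto intro!: integrable_bounded_image bounded_comp_intros)
  have "(\<integral>\<omega>. (norm (G \<omega> *v y \<omega>))\<^sup>2 \<partial>M) = (\<integral>\<omega>. (\<integral>\<omega>'. ?F ((G \<omega>', W \<omega>'), (0, y \<omega>)) \<partial>M) \<partial>M)"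
    using indep_var_integral_iterated(1)[OF ind F int] by simp
  also have "\<dots> \<le> (\<integral>\<omega>. \<rho> * (norm (y \<omega>))\<^sup>2 \<partial>M)"
    using indep_var_integral_iterated(2)[OF ind F int] bounded contraction
    by (intro integral_mono) (auto intro!: integrable_bounded_image bounded_comp_intros)
  finally show ?thesis
    by simp
qed

lemma indep_integral_affine:
  fixes G :: "'a \<Rightarrow> real^'n^'n" and W :: "'a \<Rightarrow> real^'n" and y :: "'a \<Rightarrow> real^'n"
  assumes ind: "indep_var borel (\<lambda>\<omega>. (G \<omega>, W \<omega>)) borel (\<lambda>\<omega>. (0, y \<omega>))"
    and bounded: "bounded (G ` space M)" "bounded (W ` space M)" "bounded (y ` space M)"
  shows "(\<integral>\<omega>. G \<omega> *v y \<omega> + W \<omega> \<partial>M) = (\<integral>\<omega>. G \<omega> \<partial>M) *v (\<integral>\<omega>. y \<omega> \<partial>M) + (\<integral>\<omega>. W \<omega> \<partial>M)"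
proof -
  have [measurable]: "G \<in> borel_measurable M" "W \<in> borel_measurable M" "y \<in> borel_measurable M"
    using indep_var_rv1[OF ind] indep_var_rv2[OF ind] by (simp_all add: borel_measurable_Pair_iff)
  let ?F = "\<lambda>pq :: ((real^'n^'n) \<times> (real^'n)) \<times> ((real^'n^'n) \<times> (real^'n)). fst (fst pq) *v snd (snd pq)"
  have F: "?F \<in> borel_measurable (borel \<Otimes>\<^sub>M borel)"
    unfolding borel_prod by (auto intro!: borel_measurable_continuous_onI continuous_intros)
  have int: "integrable M (\<lambda>\<omega>. ?F ((G \<omega>, W \<omega>), (0, y \<omega>)))" "integrable M G" "integrable M W"
    "integrable M y"
    using bounded by (auto intro!: integrable_bounded_image bounded_comp_intros)
  have "(\<integral>\<omega>. G \<omega> *v y \<omega> \<partial>M) = (\<integral>\<omega>. (\<integral>\<omega>'. ?F ((G \<omega>', W \<omega>'), (0, y \<omega>)) \<partial>M) \<partial>M)"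
    using indep_var_integral_iterated(1)[OF ind F int(1)] by simp
  also have "\<dots> = (\<integral>\<omega>. (\<integral>\<omega>'. G \<omega>' \<partial>M) *v y \<omega> \<partial>M)"
    using integral_bounded_linear[OF bounded_linear_matrix_vector_mult_left int(2)] by simp
  also have "\<dots> = (\<integral>\<omega>. G \<omega> \<partial>M) *v (\<integral>\<omega>. y \<omega> \<partial>M)"
    using int(4) by (intro integral_bounded_linear) simp
  finally show ?thesis
    using int by simp
qed

lemma indep_second_moment_affine_le:
  fixes G :: "'a \<Rightarrow> real^'n^'n" and W :: "'a \<Rightarrow> real^'n" and y :: "'a \<Rightarrow> real^'n"
  assumes ind: "indep_var borel (\<lambda>\<omega>. (G \<omega>, W \<omega>)) borel (\<lambda>\<omega>. (0, y \<omega>))"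
    and bounded: "bounded (G ` space M)" "bounded (W ` space M)" "bounded (y ` space M)"
    and contraction: "\<And>v. (\<integral>\<omega>. (norm (G \<omega> *v v))\<^sup>2 \<partial>M) \<le> \<rho> * (norm v)\<^sup>2"
  shows "(\<integral>\<omega>. (norm (G \<omega> *v y \<omega> + W \<omega>))\<^sup>2 \<partial>M) \<le>
    \<rho> * (\<integral>\<omega>. (norm (y \<omega>))\<^sup>2 \<partial>M) + (\<integral>\<omega>. (norm (W \<omega>))\<^sup>2 \<partial>M)
    + 2 * ((\<integral>\<omega>. y \<omega> \<partial>M) \<bullet> (\<integral>\<omega>. transpose (G \<omega>) *v W \<omega> \<partial>M))"
proof -
  have [measurable]: "G \<in> borel_measurable M" "W \<in> borel_measurable M" "y \<in> borel_measurable M"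
    using indep_var_rv1[OF ind] indep_var_rv2[OF ind] by (simp_all add: borel_measurable_Pair_iff)
  let ?F = "\<lambda>pq :: ((real^'n^'n) \<times> (real^'n)) \<times> ((real^'n^'n) \<times> (real^'n)). (fst (fst pq) *v snd (snd pq)) \<bullet> snd (fst pq)"
  have F: "?F \<in> borel_measurable (borel \<Otimes>\<^sub>M borel)"
    unfolding borel_prod by (auto intro!: borel_measurable_continuous_onI continuous_intros)
  have int: "integrable M (\<lambda>\<omega>. ?F ((G \<omega>, W \<omega>), (0, y \<omega>)))"
    "integrable M (\<lambda>\<omega>. (norm (G \<omega> *v y \<omega>))\<^sup>2)" "integrable M (\<lambda>\<omega>. (norm (W \<omega>))\<^sup>2)"
    "integrable M (\<lambda>\<omega>. transpose (G \<omega>) *v W \<omega>)" "integrable M y"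
    using bounded
    by (auto simp del: transpose_matrix_vector intro!: integrable_bounded_image bounded_comp_intros)
  have cross: "(\<integral>\<omega>. (G \<omega> *v y \<omega>) \<bullet> W \<omega> \<partial>M) = (\<integral>\<omega>. y \<omega> \<partial>M) \<bullet> (\<integral>\<omega>. transpose (G \<omega>) *v W \<omega> \<partial>M)"
  proof -
    have "(\<integral>\<omega>. (G \<omega> *v y \<omega>) \<bullet> W \<omega> \<partial>M) = (\<integral>\<omega>. (\<integral>\<omega>'. ?F ((G \<omega>', W \<omega>'), (0, y \<omega>)) \<partial>M) \<partial>M)"
      using indep_var_integral_iterated(1)[OF ind F int(1)] by simp
    also have "\<dots> = (\<integral>\<omega>. y \<omega> \<bullet> (\<integral>\<omega>'. transpose (G \<omega>') *v W \<omega>' \<partial>M) \<partial>M)"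
      using int(4) by (simp add: inner_matrix_vector_mult_left)
    finally show ?thesis
      using int(5) by simp
  qed
  have "(norm (G \<omega> *v y \<omega> + W \<omega>))\<^sup>2 = (norm (G \<omega> *v y \<omega>))\<^sup>2 + (norm (W \<omega>))\<^sup>2 + 2 * ((G \<omega> *v y \<omega>) \<bullet> W \<omega>)" for \<omega>
    by (simp add: power2_norm_eq_inner inner_add_left inner_add_right inner_commute)
  then have "(\<integral>\<omega>. (norm (G \<omega> *v y \<omega> + W \<omega>))\<^sup>2 \<partial>M)
      = (\<integral>\<omega>. (norm (G \<omega> *v y \<omega>))\<^sup>2 \<partial>M) + (\<integral>\<omega>. (norm (W \<omega>))\<^sup>2 \<partial>M) + 2 * (\<integral>\<omega>. (G \<omega> *v y \<omega>) \<bullet> W \<omega> \<partial>M)"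
    using int(1-3) by simp
  then show ?thesis
    unfolding cross using indep_second_moment_matrix_vector_mult_le[OF ind bounded(1,3) contraction]
    by linarith
qed

end


section \<open>Deterministic estimates\<close>

lemma linear_recurrence_le:
  fixes x r u :: "nat \<Rightarrow> real"
  assumes step: "\<And>s. x (Suc s) \<le> r (Suc s) * x s + u (Suc s)"
    and r_nonneg: "\<And>s. 1 \<le> s \<Longrightarrow> 0 \<le> r s"
  shows "x t \<le> (\<Prod>s=1..t. r s) * x 0 + (\<Sum>s=1..t. (\<Prod>j=s+1..t. r j) * u s)"
proof (induction t)
  case (Suc t)
  have prod_Suc: "(\<Prod>j=s+1..Suc t. r j) = r (Suc t) * (\<Prod>j=s+1..t. r j)" if "s \<le> t" for s
    using that by (simp add: prod.nat_ivl_Suc' mult.commute)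
  have "(\<Sum>s=1..Suc t. (\<Prod>j=s+1..Suc t. r j) * u s)
      = (\<Sum>s=1..t. r (Suc t) * ((\<Prod>j=s+1..t. r j) * u s)) + u (Suc t)"
    by (simp add: sum.nat_ivl_Suc' prod_Suc mult_ac)
  also have "\<dots> = r (Suc t) * (\<Sum>s=1..t. (\<Prod>j=s+1..t. r j) * u s) + u (Suc t)"
    by (simp add: sum_distrib_left)
  finally have sum_Suc: "(\<Sum>s=1..Suc t. (\<Prod>j=s+1..Suc t. r j) * u s)
      = r (Suc t) * (\<Sum>s=1..t. (\<Prod>j=s+1..t. r j) * u s) + u (Suc t)" .
  have "x (Suc t) \<le> r (Suc t) * x t + u (Suc t)"
    by (rule step)
  also have "\<dots> \<le> r (Suc t) * ((\<Prod>s=1..t. r s) * x 0 + (\<Sum>s=1..t. (\<Prod>j=s+1..t. r j) * u s)) + u (Suc t)"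
    using Suc r_nonneg[of "Suc t"] by (intro add_right_mono mult_left_mono) auto
  also have "\<dots> = (\<Prod>s=1..Suc t. r s) * x 0 + (\<Sum>s=1..Suc t. (\<Prod>j=s+1..Suc t. r j) * u s)"
    unfolding sum_Suc by (simp add: prod.nat_ivl_Suc' algebra_simps)
  finally show ?case .
qed simp

lemma prod_one_minus_power_le_exp:
  fixes \<eta> :: "nat \<Rightarrow> real" and H :: "nat \<Rightarrow> nat"
  assumes "\<And>j. j \<in> S \<Longrightarrow> 0 \<le> \<eta> j * a \<and> \<eta> j * a \<le> 1"
  shows "(\<Prod>j\<in>S. (1 - \<eta> j * a) ^ H j) \<le> exp (- a * (\<Sum>j\<in>S. \<eta> j * real (H j)))"
proof -
  have "(1 - \<eta> j * a) ^ H j \<le> exp (- (\<eta> j * a)) ^ H j" if "j \<in> S" for j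
    using assms[OF that] exp_ge_add_one_self[of "- (\<eta> j * a)"] by (intro power_mono) auto
  then have "(\<Prod>j\<in>S. (1 - \<eta> j * a) ^ H j) \<le> (\<Prod>j\<in>S. exp (- (\<eta> j * a) * real (H j)))"
    using assms by (intro prod_mono) (simp add: exp_of_nat_mult[symmetric] mult.commute)
  also have "\<dots> = exp (- a * (\<Sum>j\<in>S. \<eta> j * real (H j)))"
    by (cases "finite S") (simp_all add: exp_sum[symmetric] sum_distrib_left algebra_simps)
  finally show ?thesis .
qed

primrec step_power :: "real^'d^'d \<Rightarrow> real \<Rightarrow> nat \<Rightarrow> real^'d \<Rightarrow> real^'d" where
  "step_power B e 0 v = v"
| "step_power B e (Suc k) v = (mat 1 - e *\<^sub>R B) *v step_power B e k v"

lemma step_power_zero [simp]: "step_power B e k 0 = 0"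
  by (induction k) simp_all

lemma step_power_sum: "step_power B e k (\<Sum>c\<in>I. v c) = (\<Sum>c\<in>I. step_power B e k (v c))"
  by (induction k) (simp_all add: matrix_vector_mult_sum_right)

lemma step_power_commute: "B *v step_power B e k v = step_power B e k (B *v v)"
proof (induction k)
  case (Suc k)
  have "B *v ((mat 1 - e *\<^sub>R B) *v w) = (mat 1 - e *\<^sub>R B) *v (B *v w)" for w
    by (simp add: matrix_vector_mult_diff_rdistrib matrix_vector_right_distrib
        scaleR_matrix_vector_assoc[symmetric] matrix_vector_mult_diff_distrib matrix_vector_mult_scaleR)
  then show ?case
    using Suc by simp
qed simp

lemma step_power_telescope: "v - step_power B e h v = e *\<^sub>R (\<Sum>k<h. B *v step_power B e k v)"
  by (induction h)
     (simp_all add: algebra_simps matrix_vector_mult_diff_rdistrib scaleR_matrix_vector_assoc[symmetric])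

lemma norm_step_power_le:
  "(\<And>w. norm ((mat 1 - e *\<^sub>R B) *v w) \<le> norm w) \<Longrightarrow> norm (step_power B e k v) \<le> norm v"
  by (induction k) (auto intro: order_trans)

lemma norm_step_power_diff_le:
  assumes B: "\<And>w. norm ((mat 1 - e *\<^sub>R B) *v w) \<le> norm w"
    and C: "\<And>w. norm ((mat 1 - e *\<^sub>R C) *v w) \<le> norm w" and "0 \<le> e"
  shows "norm (step_power B e k v - step_power C e k v) \<le> real k * e * opnorm (B - C) * norm v"
proof (induction k)
  case (Suc k)
  let ?x = "step_power B e k v" and ?y = "step_power C e k v"
  have "step_power B e (Suc k) v - step_power C e (Suc k) v
      = (mat 1 - e *\<^sub>R B) *v (?x - ?y) - e *\<^sub>R ((B - C) *v ?y)"
    by (simp add: matrix_vector_mult_diff_rdistrib matrix_vector_mult_diff_distrib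
        scaleR_matrix_vector_assoc[symmetric] algebra_simps)
  also have "norm \<dots> \<le> norm ((mat 1 - e *\<^sub>R B) *v (?x - ?y)) + e * norm ((B - C) *v ?y)"
    using norm_triangle_ineq4[of "(mat 1 - e *\<^sub>R B) *v (?x - ?y)" "e *\<^sub>R ((B - C) *v ?y)"] \<open>0 \<le> e\<close>
    by simp
  also have "\<dots> \<le> real k * e * opnorm (B - C) * norm v + e * (opnorm (B - C) * norm v)"
  proof (intro add_mono mult_left_mono)
    show "norm ((mat 1 - e *\<^sub>R B) *v (?x - ?y)) \<le> real k * e * opnorm (B - C) * norm v"
      using B Suc order_trans by blast
    show "norm ((B - C) *v ?y) \<le> opnorm (B - C) * norm v"
      using norm_matrix_vector_mult_le_opnorm norm_step_power_le[OF C] opnorm_nonneg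
      by (meson mult_left_mono order_trans)
  qed (use \<open>0 \<le> e\<close> in simp)
  also have "\<dots> = real (Suc k) * e * opnorm (B - C) * norm v"
    by (simp add: algebra_simps)
  finally show ?case .
qed simp

lemma nonexpansive_step_average:
  fixes B :: "nat \<Rightarrow> real^'d^'d"
  assumes "1 \<le> N" and "\<And>c w. c < N \<Longrightarrow> norm ((mat 1 - e *\<^sub>R B c) *v w) \<le> norm w"
  shows "norm ((mat 1 - e *\<^sub>R ((1 / real N) *\<^sub>R (\<Sum>c<N. B c))) *v w) \<le> norm w"
proof -
  have "(mat 1 - e *\<^sub>R ((1 / real N) *\<^sub>R (\<Sum>c<N. B c))) *v w
      = (1 / real N) *\<^sub>R (\<Sum>c<N. (mat 1 - e *\<^sub>R B c) *v w)"
    using assms(1)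
    by (simp add: matrix_vector_mult_diff_rdistrib sum_subtractf scaleR_matrix_vector_assoc[symmetric]
        matrix_vector_mult_sum_left scaleR_sum_right[symmetric] scaleR_diff_right sum_constant_scaleR
        del: sum_constant)
  also have "norm \<dots> \<le> (1 / real N) * (\<Sum>c<N. norm ((mat 1 - e *\<^sub>R B c) *v w))"
    by (simp add: norm_sum divide_right_mono)
  also have "\<dots> \<le> (1 / real N) * (\<Sum>c<N. norm w)"
    using assms(2) by (intro mult_left_mono sum_mono) auto
  also have "\<dots> = norm w"
    using assms(1) by simp
  finally show ?thesis .
qed


lemma sum_step_power_drift_eq:
  "(\<Sum>c\<in>I. step_power (B c) e H (\<delta> c) - \<delta> c)
    = - (e *\<^sub>R (\<Sum>k<H. \<Sum>c\<in>I. step_power (B c) e k (B c *v \<delta> c)))"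
proof -
  have "step_power (B c) e H (\<delta> c) - \<delta> c = - (e *\<^sub>R (\<Sum>k<H. step_power (B c) e k (B c *v \<delta> c)))" for c
    using step_power_telescope[of "\<delta> c" "B c" e H] unfolding step_power_commute by (metis minus_diff_eq)
  then show ?thesis
    by (simp add: sum_negf scaleR_sum_right[symmetric] sum.swap[of _ I])
qed

lemma heterogeneity_drift_le:
  fixes B :: "nat \<Rightarrow> real^'d^'d" and \<delta> :: "nat \<Rightarrow> real^'d"
  assumes N: "1 \<le> N" and balanced: "(\<Sum>c<N. B c *v \<delta> c) = 0"
    and nonexpansive: "\<And>c w. c < N \<Longrightarrow> norm ((mat 1 - e *\<^sub>R B c) *v w) \<le> norm w"
    and e: "0 \<le> e"
  defines "Bavg \<equiv> (1 / real N) *\<^sub>R (\<Sum>c<N. B c)"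
  shows "norm ((1 / real N) *\<^sub>R (\<Sum>c<N. step_power (B c) e H (\<delta> c) - \<delta> c))
    \<le> e\<^sup>2 * (real H)\<^sup>2 * ((1 / real N) * (\<Sum>c<N. opnorm (B c - Bavg) * norm (B c *v \<delta> c)))"
proof -
  define Q where "Q = (\<Sum>c<N. opnorm (B c - Bavg) * norm (B c *v \<delta> c))"
  define T where "T k = (\<Sum>c<N. step_power (B c) e k (B c *v \<delta> c))" for k
  have telescope: "(\<Sum>c<N. step_power (B c) e H (\<delta> c) - \<delta> c) = - (e *\<^sub>R (\<Sum>k<H. T k))"
    unfolding T_def by (rule sum_step_power_drift_eq)
  \<comment> \<open>By balance, the run of the average matrix contributes nothing and may be subtracted.\<close>
  have T_le: "norm (T k) \<le> real k * e * Q" for k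
  proof -
    have "T k = (\<Sum>c<N. step_power (B c) e k (B c *v \<delta> c) - step_power Bavg e k (B c *v \<delta> c))"
      unfolding T_def using step_power_sum[of Bavg e k "\<lambda>c. B c *v \<delta> c" "{..<N}"] balanced
      by (simp add: sum_subtractf)
    also have "norm \<dots> \<le> (\<Sum>c<N. real k * e * opnorm (B c - Bavg) * norm (B c *v \<delta> c))"
      unfolding Bavg_def using nonexpansive_step_average[OF N nonexpansive] nonexpansive e
      by (intro order_trans[OF norm_sum] sum_mono norm_step_power_diff_le) auto
    also have "\<dots> = real k * e * Q"
      unfolding Q_def by (simp add: sum_distrib_left mult.assoc)
    finally show ?thesis .
  qed
  have "norm (\<Sum>k<H. T k) \<le> (\<Sum>k<H. real k) * (e * Q)"
    using T_le by (intro order_trans[OF norm_sum]) (simp add: sum_mono sum_distrib_right mult.assoc)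
  also have "\<dots> \<le> (real H)\<^sup>2 * (e * Q)"
  proof (rule mult_right_mono)
    show "(\<Sum>k<H. real k) \<le> (real H)\<^sup>2"
      using sum_mono[of "{..<H}" "\<lambda>k. real k" "\<lambda>_. real H"] by (simp add: power2_eq_square)
    show "0 \<le> e * Q"
      unfolding Q_def using e opnorm_nonneg by (intro mult_nonneg_nonneg sum_nonneg) auto
  qed
  finally have "(1 / real N) * (e * norm (\<Sum>k<H. T k)) \<le> (1 / real N) * (e * ((real H)\<^sup>2 * (e * Q)))"
    using e by (intro mult_left_mono) auto
  then show ?thesis
    unfolding telescope Q_def[symmetric] using e by (simp add: power2_eq_square mult_ac)
qed


primrec noisy_run ::
  "('z \<Rightarrow> real^'d^'d) \<Rightarrow> real \<Rightarrow> (nat \<Rightarrow> 'z \<Rightarrow> real^'d) \<Rightarrow> real^'d \<Rightarrow> (nat \<Rightarrow> 'z) \<Rightarrow> nat \<Rightarrow> real^'d" where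
  "noisy_run Ac e \<xi> y0 zs 0 = y0"
| "noisy_run Ac e \<xi> y0 zs (Suc h) = (mat 1 - e *\<^sub>R Ac (zs (Suc h))) *v noisy_run Ac e \<xi> y0 zs h + \<xi> h (zs (Suc h))"

primrec run_matrix :: "('z \<Rightarrow> real^'d^'d) \<Rightarrow> real \<Rightarrow> (nat \<Rightarrow> 'z) \<Rightarrow> nat \<Rightarrow> real^'d^'d" where
  "run_matrix Ac e zs 0 = mat 1"
| "run_matrix Ac e zs (Suc h) = (mat 1 - e *\<^sub>R Ac (zs (Suc h))) ** run_matrix Ac e zs h"

lemma run_matrix_mult_eq_noisy_run: "run_matrix Ac e zs h *v v = noisy_run Ac e (\<lambda>_ _. 0) v zs h"
  by (induction h) (simp_all add: matrix_vector_mul_assoc[symmetric])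

lemma local_run_eq_noisy_run:
  assumes "\<And>z. \<epsilon> z = Ac z *v \<theta> - bc z"
  shows "local_run Ac bc e zs x h = \<theta> + run_matrix Ac e zs h *v (x - \<theta>) + noisy_run Ac e (\<lambda>_ z. - e *\<^sub>R \<epsilon> z) 0 zs h"
proof (induction h)
  case (Suc h)
  have "local_run Ac bc e zs x (Suc h)
      = (mat 1 - e *\<^sub>R Ac (zs (Suc h))) *v (local_run Ac bc e zs x h - \<theta>) + \<theta> - e *\<^sub>R \<epsilon> (zs (Suc h))"
    unfolding assms by (simp add: algebra_simps matrix_vector_mult_diff_rdistrib scaleR_matrix_vector_assoc)
  then show ?case
    unfolding Suc by (simp add: algebra_simps matrix_vector_mul_assoc[symmetric] matrix_vector_right_distrib)
qed simp

text \<open>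
  Subtracting the noiseless run with the mean matrix \<open>B\<close> from the run started at \<open>\<delta>\<close> leaves a noisy run
  driven only by the fluctuations of \<open>Ac\<close> around \<open>B\<close>.
\<close>

lemma noisy_run_centered:
  "run_matrix Ac e zs h *v \<delta> - step_power B e h \<delta> + noisy_run Ac e (\<lambda>_ z. - e *\<^sub>R \<epsilon> z) 0 zs h
   = noisy_run Ac e (\<lambda>k z. - e *\<^sub>R ((Ac z - B) *v step_power B e k \<delta>) - e *\<^sub>R \<epsilon> z) 0 zs h"
proof (induction h)
  case (Suc h)
  show ?case
    unfolding noisy_run.simps run_matrix.simps step_power.simps Suc[symmetric]
    by (simp add: algebra_simps matrix_vector_mul_assoc[symmetric] matrix_vector_right_distrib
        matrix_vector_mult_diff_rdistrib scaleR_matrix_vector_assoc matrix_vector_mult_diff_distrib)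
qed simp


section \<open>The federated setting\<close>

locale fedlsa_setting = prob_space M for M :: "'w measure" +
  fixes N :: nat and Zs :: "'z measure" and \<pi> :: "nat \<Rightarrow> 'z measure"
    and A :: "nat \<Rightarrow> 'z \<Rightarrow> real^'d^'d" and b :: "nat \<Rightarrow> 'z \<Rightarrow> real^'d"
    and theta_loc :: "nat \<Rightarrow> real^'d" and theta_star :: "real^'d"
    and Z :: "nat \<Rightarrow> nat \<Rightarrow> nat \<Rightarrow> 'w \<Rightarrow> 'z"
    and eta :: "nat \<Rightarrow> real" and H :: "nat \<Rightarrow> nat" and a eta_inf :: real
  assumes N_pos: "1 \<le> N"
    and prob_space_\<pi>: "\<And>c. c < N \<Longrightarrow> prob_space (\<pi> c)"
    and sets_\<pi>: "\<And>c. c < N \<Longrightarrow> sets (\<pi> c) = sets Zs"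
    and A_measurable: "\<And>c. c < N \<Longrightarrow> A c \<in> borel_measurable Zs"
    and b_measurable: "\<And>c. c < N \<Longrightarrow> b c \<in> borel_measurable Zs"
    and b_integrable: "\<And>c. c < N \<Longrightarrow> integrable (\<pi> c) (b c)"
    and A_bounded: "\<And>c. c < N \<Longrightarrow> bounded (A c ` space Zs)"
    and noise_bounded: "\<And>c. c < N \<Longrightarrow> bounded ((\<lambda>z. A c z *v theta_loc c - b c z) ` space Zs)"
    and local_solution: "\<And>c. c < N \<Longrightarrow> (\<integral>z. A c z \<partial>\<pi> c) *v theta_loc c = (\<integral>z. b c z \<partial>\<pi> c)"
    and global_solution: "(\<Sum>c<N. \<integral>z. A c z \<partial>\<pi> c) *v theta_star = (\<Sum>c<N. \<integral>z. b c z \<partial>\<pi> c)"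
    and A1: "\<And>c e u. c < N \<Longrightarrow> 0 < e \<Longrightarrow> e < eta_inf \<Longrightarrow>
      L2_norm (\<pi> c) (\<lambda>z. (mat 1 - e *\<^sub>R A c z) *v u) \<le> (1 - e * a) * norm u"
    and a_pos: "0 < a" and eta_inf_a: "eta_inf * a \<le> 1 / 2"
    and Z_measurable: "\<And>c s h. c < N \<Longrightarrow> 1 \<le> s \<Longrightarrow> 1 \<le> h \<Longrightarrow> h \<le> H s \<Longrightarrow> Z c s h \<in> measurable M Zs"
    and Z_distr: "\<And>c s h. c < N \<Longrightarrow> 1 \<le> s \<Longrightarrow> 1 \<le> h \<Longrightarrow> h \<le> H s \<Longrightarrow> distr M Zs (Z c s h) = \<pi> c"
    and Z_indep: "indep_vars (\<lambda>_. Zs) (\<lambda>(c, s, h). Z c s h) {(c, s, h). c < N \<and> 1 \<le> s \<and> 1 \<le> h \<and> h \<le> H s}"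
    and eta_pos: "\<And>s. 1 \<le> s \<Longrightarrow> 0 < eta s"
    and eta_le: "\<And>s. 1 \<le> s \<Longrightarrow> eta s \<le> eta_inf"
begin

definition mean_A :: "nat \<Rightarrow> real^'d^'d" where
  "mean_A c = (\<integral>z. A c z \<partial>\<pi> c)"

definition mean_A_avg :: "real^'d^'d" where
  "mean_A_avg = (1 / real N) *\<^sub>R (\<Sum>c<N. mean_A c)"

text \<open>By \<open>local_solution\<close>, \<open>noise c\<close> is the centred noise \<open>\<epsilon>\<^sup>c\<close> of the paper.\<close>

definition noise :: "nat \<Rightarrow> 'z \<Rightarrow> real^'d" where
  "noise c z = A c z *v theta_loc c - b c z"

definition offset :: "nat \<Rightarrow> real^'d" where
  "offset c = theta_star - theta_loc c"

definition cov_A :: "nat \<Rightarrow> real^'d^'d" where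
  "cov_A c = (\<integral>z. transpose (A c z - mean_A c) ** (A c z - mean_A c) \<partial>\<pi> c)"

definition rho :: "nat \<Rightarrow> real" where
  "rho s = (1 - eta s * a) ^ H s"

lemma space_\<pi>: "c < N \<Longrightarrow> space (\<pi> c) = space Zs"
  using sets_\<pi> by (rule sets_eq_imp_space_eq)

lemma measurable_\<pi>: "c < N \<Longrightarrow> f \<in> measurable Zs K \<Longrightarrow> f \<in> measurable (\<pi> c) K"
  using sets_\<pi> by (simp add: measurable_def space_\<pi>)

lemma bounded_noise: "c < N \<Longrightarrow> bounded (noise c ` space Zs)"
  unfolding noise_def by (rule noise_bounded)

lemma noise_measurable: "c < N \<Longrightarrow> noise c \<in> borel_measurable Zs"
  unfolding noise_def using A_measurable b_measurable by measurable

lemma integrable_\<pi>: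
  fixes f :: "'z \<Rightarrow> 'b::{banach, second_countable_topology}"
  assumes "c < N" "f \<in> borel_measurable Zs" "bounded (f ` space Zs)"
  shows "integrable (\<pi> c) f"
proof -
  interpret \<pi>: prob_space "\<pi> c"
    by (rule prob_space_\<pi>[OF assms(1)])
  show ?thesis
    using assms by (intro \<pi>.integrable_bounded_image measurable_\<pi>) (auto simp: space_\<pi>)
qed

lemma integrable_A: "c < N \<Longrightarrow> integrable (\<pi> c) (A c)"
  by (intro integrable_\<pi> A_measurable A_bounded)

lemma integral_A_mult: "c < N \<Longrightarrow> (\<integral>z. A c z *v v \<partial>\<pi> c) = mean_A c *v v"
  unfolding mean_A_def
  by (rule integral_bounded_linear[OF bounded_linear_matrix_vector_mult_left integrable_A])

lemma noise_mean_zero: "c < N \<Longrightarrow> (\<integral>z. noise c z \<partial>\<pi> c) = 0"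
  unfolding noise_def
  using integrable_bounded_linear[OF bounded_linear_matrix_vector_mult_left integrable_A]
    b_integrable local_solution
  by (simp add: integral_A_mult mean_A_def)

lemma mean_A_offset_sum: "(\<Sum>c<N. mean_A c *v offset c) = 0"
  using local_solution global_solution
  by (simp add: offset_def mean_A_def matrix_vector_mult_diff_distrib sum_subtractf
      matrix_vector_mult_sum_left)

lemma one_minus_eta_a_bounds:
  assumes "1 \<le> s"
  shows "0 \<le> 1 - eta s * a \<and> 1 - eta s * a \<le> 1"
proof -
  have "eta s * a \<le> eta_inf * a"
    using eta_le[OF assms] a_pos by (intro mult_right_mono) auto
  moreover have "0 < eta s * a"
    using eta_pos[OF assms] a_pos by simp
  ultimately show ?thesis
    using eta_inf_a by linarith
qed

lemma rho_nonneg: "1 \<le> s \<Longrightarrow> 0 \<le> rho s"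
  unfolding rho_def using one_minus_eta_a_bounds by simp

lemma A_second_moment_step_le:
  assumes "c < N" "0 < e" "e \<le> eta_inf"
  shows "(\<integral>z. (norm ((mat 1 - e *\<^sub>R A c z) *v u))\<^sup>2 \<partial>\<pi> c) \<le> (1 - e * a)\<^sup>2 * (norm u)\<^sup>2"
proof -
  interpret \<pi>: prob_space "\<pi> c"
    by (rule prob_space_\<pi>[OF assms(1)])
  show ?thesis
    using assms A1 A_measurable A_bounded
    by (intro \<pi>.second_moment_step_le_closed[of "A c" eta_inf u a e] measurable_\<pi>) (auto simp: space_\<pi>)
qed

lemma nonexpansive_mean_step:
  assumes "c < N" "1 \<le> s"
  shows "norm ((mat 1 - eta s *\<^sub>R mean_A c) *v w) \<le> norm w"
proof -
  interpret \<pi>: prob_space "\<pi> c"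
    by (rule prob_space_\<pi>[OF assms(1)])
  have integrable: "integrable (\<pi> c) (\<lambda>z. (mat 1 - eta s *\<^sub>R A c z) *v w)"
    "integrable (\<pi> c) (\<lambda>z. (norm ((mat 1 - eta s *\<^sub>R A c z) *v w))\<^sup>2)"
    using assms A_measurable A_bounded by (auto intro!: integrable_\<pi> bounded_comp_intros)
  have "(mat 1 - eta s *\<^sub>R mean_A c) *v w = w - eta s *\<^sub>R (mean_A c *v w)"
    by (simp add: matrix_vector_mult_diff_rdistrib scaleR_matrix_vector_assoc[symmetric])
  also have "\<dots> = (\<integral>z. w - eta s *\<^sub>R (A c z *v w) \<partial>\<pi> c)"
    using assms(1) integrable_bounded_linear[OF bounded_linear_matrix_vector_mult_left integrable_A]
    by (simp add: integral_A_mult \<pi>.prob_space)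
  also have "\<dots> = (\<integral>z. (mat 1 - eta s *\<^sub>R A c z) *v w \<partial>\<pi> c)"
    by (simp add: matrix_vector_mult_diff_rdistrib scaleR_matrix_vector_assoc[symmetric])
  also have "norm \<dots> \<le> L2_norm (\<pi> c) (\<lambda>z. (mat 1 - eta s *\<^sub>R A c z) *v w)"
    using integrable by (rule \<pi>.norm_integral_le_L2_norm)
  also have "\<dots> \<le> sqrt ((1 - eta s * a)\<^sup>2 * (norm w)\<^sup>2)"
    using assms eta_pos eta_le by (intro real_sqrt_le_mono A_second_moment_step_le) auto
  also have "\<dots> \<le> norm w"
    using one_minus_eta_a_bounds[OF assms(2)] by (simp add: real_sqrt_mult mult_left_le_one_le)
  finally show ?thesis .
qed

lemma norm_step_power_mean_le: "c < N \<Longrightarrow> 1 \<le> s \<Longrightarrow> norm (step_power (mean_A c) (eta s) k w) \<le> norm w"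
  by (rule norm_step_power_le) (rule nonexpansive_mean_step)

end


context fedlsa_setting
begin

definition sample_index :: "(nat \<times> nat \<times> nat) set" where
  "sample_index = {(c, s, h). c < N \<and> 1 \<le> s \<and> 1 \<le> h \<and> h \<le> H s}"

definition samples :: "(nat \<times> nat \<times> nat) set \<Rightarrow> 'w \<Rightarrow> (nat \<times> nat \<times> nat) \<Rightarrow> 'z" where
  "samples J \<omega> = restrict (\<lambda>(c, s, h). Z c s h \<omega>) J"

definition sample_algebra :: "(nat \<times> nat \<times> nat) set \<Rightarrow> 'w measure" where
  "sample_algebra J = vimage_algebra (space M) (samples J) (PiM J (\<lambda>_. Zs))"

lemma sample_index_iff [simp]: "(c, s, h) \<in> sample_index \<longleftrightarrow> c < N \<and> 1 \<le> s \<and> 1 \<le> h \<and> h \<le> H s"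
  by (simp add: sample_index_def)

lemma space_sample_algebra [simp]: "space (sample_algebra J) = space M"
  by (simp add: sample_algebra_def)

lemma Z_in_space: "c < N \<Longrightarrow> 1 \<le> s \<Longrightarrow> 1 \<le> h \<Longrightarrow> h \<le> H s \<Longrightarrow> \<omega> \<in> space M \<Longrightarrow> Z c s h \<omega> \<in> space Zs"
  using Z_measurable by (auto simp: measurable_def)

lemma samples_measurable:
  assumes "J \<subseteq> sample_index"
  shows "samples J \<in> measurable (sample_algebra J) (PiM J (\<lambda>_. Zs))"
  unfolding sample_algebra_def
  by (rule measurable_vimage_algebra1) (use assms Z_in_space in \<open>auto simp: space_PiM samples_def\<close>)

lemma measurable_Z_sample_algebra:
  assumes "J \<subseteq> sample_index" "(c, s, h) \<in> J"
  shows "Z c s h \<in> measurable (sample_algebra J) Zs"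
proof -
  have "(\<lambda>\<omega>. samples J \<omega> (c, s, h)) \<in> measurable (sample_algebra J) Zs"
    using measurable_compose[OF samples_measurable[OF assms(1)] measurable_component_singleton[OF assms(2)]]
    by simp
  then show ?thesis
    using assms(2) by (simp add: samples_def)
qed

lemma measurable_sample_algebra_mono:
  assumes "J \<subseteq> K" "K \<subseteq> sample_index" "f \<in> measurable (sample_algebra J) L"
  shows "f \<in> measurable (sample_algebra K) L"
proof -
  have "samples J = (\<lambda>\<omega>. restrict (samples K \<omega>) J)"
    using assms(1) by (auto simp: samples_def fun_eq_iff)
  then have "samples J \<in> measurable (sample_algebra K) (PiM J (\<lambda>_. Zs))"
    using measurable_compose[OF samples_measurable[OF assms(2)] measurable_restrict_subset[OF assms(1)]]
    by simp
  then have "sets (sample_algebra J) \<subseteq> sets (sample_algebra K)"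
    unfolding sample_algebra_def[of J]
    by (subst sets_vimage_algebra2) (auto simp: measurable_def space_PiM)
  then show ?thesis
    using assms(3) measurable_mono[of L L "sample_algebra J" "sample_algebra K"] by auto
qed

lemma measurable_sample_algebra_imp_measurable:
  assumes "J \<subseteq> sample_index" "f \<in> measurable (sample_algebra J) L"
  shows "f \<in> measurable M L"
proof -
  have "samples J \<in> measurable M (PiM J (\<lambda>_. Zs))"
    using assms(1) Z_measurable unfolding samples_def by (intro measurable_restrict) auto
  then have "sets (sample_algebra J) \<subseteq> sets M"
    unfolding sample_algebra_def by (subst sets_vimage_algebra2) (auto simp: measurable_def)
  then show ?thesis
    using measurable_mono[of L L "sample_algebra J" M] assms(2) by auto
qed

lemma indep_sample_algebras:
  fixes X Y :: "'w \<Rightarrow> 'b::topological_space"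
  assumes "J \<subseteq> sample_index" "K \<subseteq> sample_index" "J \<inter> K = {}"
    and "X \<in> borel_measurable (sample_algebra J)" "Y \<in> borel_measurable (sample_algebra K)"
  shows "indep_var borel X borel Y"
proof -
  have "(\<lambda>i \<omega>. case i of (c, s, h) \<Rightarrow> Z c s h \<omega>) = (\<lambda>(c, s, h). Z c s h)"
    by (simp add: fun_eq_iff split_beta)
  then have "indep_vars (\<lambda>_. Zs) (\<lambda>i \<omega>. case i of (c, s, h) \<Rightarrow> Z c s h \<omega>) sample_index"
    using Z_indep unfolding sample_index_def by simp
  then have "indep_var (PiM J (\<lambda>_. Zs)) (samples J) (PiM K (\<lambda>_. Zs)) (samples K)"
    using assms(1-3) unfolding samples_def by (intro indep_var_restrict) auto
  then show ?thesis
    using assms(4,5) unfolding sample_algebra_def by (rule indep_var_vimage_algebra)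
qed

lemma integral_Z:
  fixes f :: "'z \<Rightarrow> 'b::{banach, second_countable_topology}"
  assumes "c < N" "1 \<le> s" "1 \<le> h" "h \<le> H s" "f \<in> borel_measurable Zs"
  shows "(\<integral>\<omega>. f (Z c s h \<omega>) \<partial>M) = (\<integral>z. f z \<partial>\<pi> c)"
  using integral_distr[OF Z_measurable[OF assms(1-4)] assms(5)] Z_distr[OF assms(1-4)] by simp

end


context fedlsa_setting
begin

definition local_samples :: "nat \<Rightarrow> nat \<Rightarrow> nat \<Rightarrow> (nat \<times> nat \<times> nat) set" where
  "local_samples c s h = {(c', s', k). c' = c \<and> s' = s \<and> 1 \<le> k \<and> k \<le> h}"

lemma bounded_comp_Z:
  assumes "c < N" "1 \<le> s" "1 \<le> k" "k \<le> H s" "bounded (f ` space Zs)"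
  shows "bounded ((\<lambda>\<omega>. f (Z c s k \<omega>)) ` space M)"
  by (rule bounded_subset[OF assms(5)]) (use assms(1-4) Z_in_space in auto)

lemma noisy_run_measurable:
  assumes "c < N" and Z: "\<And>k. 1 \<le> k \<Longrightarrow> k \<le> h \<Longrightarrow> Z c s k \<in> measurable F Zs"
    and \<xi>: "\<And>k. k < h \<Longrightarrow> \<xi> k \<in> borel_measurable Zs"
  shows "(\<lambda>\<omega>. noisy_run (A c) e \<xi> y0 (\<lambda>k. Z c s k \<omega>) h) \<in> borel_measurable F"
  using Z \<xi>
proof (induction h)
  case (Suc h)
  have "Z c s (Suc h) \<in> measurable F Zs"
    using Suc.prems by simp
  then show ?case
    using Suc A_measurable[OF \<open>c < N\<close>] by (simp add: measurable_compose[of _ F Zs _ borel])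
qed simp

lemma run_matrix_measurable:
  assumes "c < N" and Z: "\<And>k. 1 \<le> k \<Longrightarrow> k \<le> h \<Longrightarrow> Z c s k \<in> measurable F Zs"
  shows "(\<lambda>\<omega>. run_matrix (A c) e (\<lambda>k. Z c s k \<omega>) h) \<in> borel_measurable F"
  using Z
proof (induction h)
  case (Suc h)
  have "Z c s (Suc h) \<in> measurable F Zs"
    using Suc.prems by simp
  then show ?case
    using Suc A_measurable[OF \<open>c < N\<close>] by (simp add: measurable_compose[of _ F Zs _ borel])
qed simp

lemma noisy_run_bounded:
  assumes "c < N" "1 \<le> s" "h \<le> H s" and \<xi>: "\<And>k. k < h \<Longrightarrow> bounded (\<xi> k ` space Zs)"
  shows "bounded ((\<lambda>\<omega>. noisy_run (A c) e \<xi> y0 (\<lambda>k. Z c s k \<omega>) h) ` space M)"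
  using assms(3) \<xi>
proof (induction h)
  case (Suc h)
  then show ?case
    using assms(1,2) A_bounded
    by (simp add: bounded_comp_intros bounded_comp_Z)
qed simp

lemma run_matrix_bounded:
  assumes "c < N" "1 \<le> s" "h \<le> H s"
  shows "bounded ((\<lambda>\<omega>. run_matrix (A c) e (\<lambda>k. Z c s k \<omega>) h) ` space M)"
  using assms(3)
proof (induction h)
  case (Suc h)
  then show ?case
    using assms(1,2) A_bounded
    by (simp add: bounded_comp_intros bounded_comp_Z)
qed simp

lemma local_step_indep:
  assumes c: "c < N" "1 \<le> s" "Suc h \<le> H s" and \<xi>: "\<And>k. k \<le> h \<Longrightarrow> \<xi> k \<in> borel_measurable Zs"
  shows "indep_var
    borel (\<lambda>\<omega>. (mat 1 - e *\<^sub>R A c (Z c s (Suc h) \<omega>), \<xi> h (Z c s (Suc h) \<omega>)))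
    borel (\<lambda>\<omega>. (0, noisy_run (A c) e \<xi> y0 (\<lambda>k. Z c s k \<omega>) h))"
proof (rule indep_sample_algebras)
  show J: "{(c, s, Suc h)} \<subseteq> sample_index" and K: "local_samples c s h \<subseteq> sample_index"
    using c by (auto simp: local_samples_def)
  show "{(c, s, Suc h)} \<inter> local_samples c s h = {}"
    by (auto simp: local_samples_def)
  have "Z c s (Suc h) \<in> measurable (sample_algebra {(c, s, Suc h)}) Zs"
    using J by (intro measurable_Z_sample_algebra) auto
  then show "(\<lambda>\<omega>. (mat 1 - e *\<^sub>R A c (Z c s (Suc h) \<omega>), \<xi> h (Z c s (Suc h) \<omega>)))
      \<in> borel_measurable (sample_algebra {(c, s, Suc h)})"
    using A_measurable[OF c(1)] \<xi>[of h] by (simp add: measurable_compose[of _ _ Zs _ borel])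
  have "(\<lambda>\<omega>. noisy_run (A c) e \<xi> y0 (\<lambda>k. Z c s k \<omega>) h) \<in> borel_measurable (sample_algebra (local_samples c s h))"
    using c(1) K \<xi> by (intro noisy_run_measurable measurable_Z_sample_algebra) (auto simp: local_samples_def)
  then show "(\<lambda>\<omega>. (0::real^'d^'d, noisy_run (A c) e \<xi> y0 (\<lambda>k. Z c s k \<omega>) h))
      \<in> borel_measurable (sample_algebra (local_samples c s h))"
    by simp
qed

lemma local_step_second_moment_le:
  assumes "c < N" "1 \<le> s" "1 \<le> k" "k \<le> H s"
  shows "(\<integral>\<omega>. (norm ((mat 1 - eta s *\<^sub>R A c (Z c s k \<omega>)) *v v))\<^sup>2 \<partial>M) \<le> (1 - eta s * a)\<^sup>2 * (norm v)\<^sup>2"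
proof -
  have "(\<lambda>z. (norm ((mat 1 - eta s *\<^sub>R A c z) *v v))\<^sup>2) \<in> borel_measurable Zs"
    using A_measurable[OF assms(1)] by measurable
  then have "(\<integral>\<omega>. (norm ((mat 1 - eta s *\<^sub>R A c (Z c s k \<omega>)) *v v))\<^sup>2 \<partial>M)
      = (\<integral>z. (norm ((mat 1 - eta s *\<^sub>R A c z) *v v))\<^sup>2 \<partial>\<pi> c)"
    using assms by (intro integral_Z)
  also have "\<dots> \<le> (1 - eta s * a)\<^sup>2 * (norm v)\<^sup>2"
    using assms eta_pos eta_le by (intro A_second_moment_step_le) auto
  finally show ?thesis .
qed

lemma noisy_run_step_moments:
  fixes \<xi> :: "nat \<Rightarrow> 'z \<Rightarrow> real^'d" and y0 :: "real^'d"
  assumes c: "c < N" "1 \<le> s" "Suc h \<le> H s"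
    and \<xi>_measurable: "\<And>k. k \<le> h \<Longrightarrow> \<xi> k \<in> borel_measurable Zs"
    and \<xi>_bounded: "\<And>k. k \<le> h \<Longrightarrow> bounded (\<xi> k ` space Zs)"
  defines "y \<equiv> \<lambda>h \<omega>. noisy_run (A c) (eta s) \<xi> y0 (\<lambda>k. Z c s k \<omega>) h"
    and "G \<equiv> \<lambda>\<omega>. mat 1 - eta s *\<^sub>R A c (Z c s (Suc h) \<omega>)"
  shows "(\<integral>\<omega>. (norm (y (Suc h) \<omega>))\<^sup>2 \<partial>M) \<le> (1 - eta s * a)\<^sup>2 * (\<integral>\<omega>. (norm (y h \<omega>))\<^sup>2 \<partial>M)
          + (\<integral>z. (norm (\<xi> h z))\<^sup>2 \<partial>\<pi> c)
          + 2 * ((\<integral>\<omega>. y h \<omega> \<partial>M) \<bullet> (\<integral>\<omega>. transpose (G \<omega>) *v \<xi> h (Z c s (Suc h) \<omega>) \<partial>M))"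
    and "(\<integral>\<omega>. y (Suc h) \<omega> \<partial>M) = (\<integral>\<omega>. G \<omega> \<partial>M) *v (\<integral>\<omega>. y h \<omega> \<partial>M) + (\<integral>z. \<xi> h z \<partial>\<pi> c)"
proof -
  have indep: "indep_var borel (\<lambda>\<omega>. (G \<omega>, \<xi> h (Z c s (Suc h) \<omega>))) borel (\<lambda>\<omega>. (0, y h \<omega>))"
    unfolding G_def y_def using c \<xi>_measurable by (intro local_step_indep) auto
  have bounded: "bounded (G ` space M)" "bounded ((\<lambda>\<omega>. \<xi> h (Z c s (Suc h) \<omega>)) ` space M)"
    "bounded (y h ` space M)"
    unfolding G_def y_def using c A_bounded \<xi>_bounded
    by (auto intro!: bounded_comp_intros bounded_comp_Z noisy_run_bounded)
  have "y (Suc h) \<omega> = G \<omega> *v y h \<omega> + \<xi> h (Z c s (Suc h) \<omega>)" for \<omega>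
    unfolding y_def G_def by simp
  moreover have "(\<integral>\<omega>. \<xi> h (Z c s (Suc h) \<omega>) \<partial>M) = (\<integral>z. \<xi> h z \<partial>\<pi> c)"
    "(\<integral>\<omega>. (norm (\<xi> h (Z c s (Suc h) \<omega>)))\<^sup>2 \<partial>M) = (\<integral>z. (norm (\<xi> h z))\<^sup>2 \<partial>\<pi> c)"
    using c \<xi>_measurable by (auto intro!: integral_Z)
  moreover have "(\<integral>\<omega>. (norm (G \<omega> *v v))\<^sup>2 \<partial>M) \<le> (1 - eta s * a)\<^sup>2 * (norm v)\<^sup>2" for v
    unfolding G_def using c by (intro local_step_second_moment_le) auto
  ultimately show "(\<integral>\<omega>. (norm (y (Suc h) \<omega>))\<^sup>2 \<partial>M) \<le> (1 - eta s * a)\<^sup>2 * (\<integral>\<omega>. (norm (y h \<omega>))\<^sup>2 \<partial>M)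
          + (\<integral>z. (norm (\<xi> h z))\<^sup>2 \<partial>\<pi> c)
          + 2 * ((\<integral>\<omega>. y h \<omega> \<partial>M) \<bullet> (\<integral>\<omega>. transpose (G \<omega>) *v \<xi> h (Z c s (Suc h) \<omega>) \<partial>M))"
    and "(\<integral>\<omega>. y (Suc h) \<omega> \<partial>M) = (\<integral>\<omega>. G \<omega> \<partial>M) *v (\<integral>\<omega>. y h \<omega> \<partial>M) + (\<integral>z. \<xi> h z \<partial>\<pi> c)"
    using indep_second_moment_affine_le[OF indep bounded] indep_integral_affine[OF indep bounded]
    by simp_all
qed

lemma noisy_run_noiseless_second_moment_le:
  assumes "c < N" "1 \<le> s" "h \<le> H s"
  shows "(\<integral>\<omega>. (norm (noisy_run (A c) (eta s) (\<lambda>_ _. 0) v (\<lambda>k. Z c s k \<omega>) h))\<^sup>2 \<partial>M)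
    \<le> ((1 - eta s * a)\<^sup>2) ^ h * (norm v)\<^sup>2"
  using assms(3)
proof (induction h)
  case (Suc h)
  have "(\<integral>\<omega>. (norm (noisy_run (A c) (eta s) (\<lambda>_ _. 0) v (\<lambda>k. Z c s k \<omega>) (Suc h)))\<^sup>2 \<partial>M)
      \<le> (1 - eta s * a)\<^sup>2 * (\<integral>\<omega>. (norm (noisy_run (A c) (eta s) (\<lambda>_ _. 0) v (\<lambda>k. Z c s k \<omega>) h))\<^sup>2 \<partial>M)"
    using noisy_run_step_moments(1)[of c s h "\<lambda>_ _. 0"] assms Suc.prems by simp
  also have "\<dots> \<le> (1 - eta s * a)\<^sup>2 * (((1 - eta s * a)\<^sup>2) ^ h * (norm v)\<^sup>2)"
    using Suc by (intro mult_left_mono) auto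
  finally show ?case
    by (simp add: algebra_simps)
qed (simp add: prob_space)

lemma noisy_run_centered_moments:
  assumes c: "c < N" "1 \<le> s" "h \<le> H s"
    and \<xi>_measurable: "\<And>k. k < h \<Longrightarrow> \<xi> k \<in> borel_measurable Zs"
    and \<xi>_bounded: "\<And>k. k < h \<Longrightarrow> bounded (\<xi> k ` space Zs)"
    and \<xi>_mean: "\<And>k. k < h \<Longrightarrow> (\<integral>z. \<xi> k z \<partial>\<pi> c) = 0"
  shows "(\<integral>\<omega>. noisy_run (A c) (eta s) \<xi> 0 (\<lambda>k. Z c s k \<omega>) h \<partial>M) = 0 \<and>
    (\<integral>\<omega>. (norm (noisy_run (A c) (eta s) \<xi> 0 (\<lambda>k. Z c s k \<omega>) h))\<^sup>2 \<partial>M) \<le> (\<Sum>k<h. (\<integral>z. (norm (\<xi> k z))\<^sup>2 \<partial>\<pi> c))"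
  using c(3) \<xi>_measurable \<xi>_bounded \<xi>_mean
proof (induction h)
  case (Suc h)
  let ?y = "\<lambda>h \<omega>. noisy_run (A c) (eta s) \<xi> 0 (\<lambda>k. Z c s k \<omega>) h"
  have IH: "(\<integral>\<omega>. ?y h \<omega> \<partial>M) = 0" "(\<integral>\<omega>. (norm (?y h \<omega>))\<^sup>2 \<partial>M) \<le> (\<Sum>k<h. (\<integral>z. (norm (\<xi> k z))\<^sup>2 \<partial>\<pi> c))"
    using Suc by auto
  have step: "(\<integral>\<omega>. (norm (?y (Suc h) \<omega>))\<^sup>2 \<partial>M) \<le> (1 - eta s * a)\<^sup>2 * (\<integral>\<omega>. (norm (?y h \<omega>))\<^sup>2 \<partial>M)
      + (\<integral>z. (norm (\<xi> h z))\<^sup>2 \<partial>\<pi> c)"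
    "(\<integral>\<omega>. ?y (Suc h) \<omega> \<partial>M) = 0"
    using noisy_run_step_moments[of c s h \<xi> 0] c Suc.prems IH by simp_all
  have "(1 - eta s * a)\<^sup>2 * (\<integral>\<omega>. (norm (?y h \<omega>))\<^sup>2 \<partial>M) \<le> (\<integral>\<omega>. (norm (?y h \<omega>))\<^sup>2 \<partial>M)"
    using one_minus_eta_a_bounds[OF c(2)] by (intro mult_left_le_one_le) (auto simp: power_le_one)
  then show ?case
    using step IH by simp
qed simp

end


context fedlsa_setting
begin

definition local_noise :: "nat \<Rightarrow> nat \<Rightarrow> nat \<Rightarrow> 'z \<Rightarrow> real^'d" where
  "local_noise c s k z =
     - eta s *\<^sub>R ((A c z - mean_A c) *v step_power (mean_A c) (eta s) k (offset c)) - eta s *\<^sub>R noise c z"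

definition agent_noise :: "nat \<Rightarrow> nat \<Rightarrow> 'w \<Rightarrow> real^'d" where
  "agent_noise c s \<omega> = noisy_run (A c) (eta s) (local_noise c s) 0 (\<lambda>k. Z c s k \<omega>) (H s)"

definition agent_noise_scale :: "nat \<Rightarrow> real" where
  "agent_noise_scale c = sqrt (opnorm (cov_A c)) * norm (offset c) + L2_norm (\<pi> c) (noise c)"

definition round_samples :: "nat \<Rightarrow> nat \<Rightarrow> (nat \<times> nat \<times> nat) set" where
  "round_samples n s = {(c, r, h). c < n \<and> r = s \<and> 1 \<le> h \<and> h \<le> H s}"

lemma local_noise_measurable: "c < N \<Longrightarrow> local_noise c s k \<in> borel_measurable Zs"
  unfolding local_noise_def using A_measurable noise_measurable by measurable

lemma local_noise_bounded: "c < N \<Longrightarrow> bounded (local_noise c s k ` space Zs)"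
  unfolding local_noise_def using A_bounded bounded_noise
  by (intro bounded_comp_intros) auto

lemma local_noise_mean_zero:
  assumes "c < N"
  shows "(\<integral>z. local_noise c s k z \<partial>\<pi> c) = 0"
proof -
  interpret \<pi>: prob_space "\<pi> c"
    by (rule prob_space_\<pi>[OF assms])
  have "integrable (\<pi> c) (\<lambda>z. A c z *v v)" "integrable (\<pi> c) (noise c)" for v
    using assms A_measurable A_bounded noise_measurable bounded_noise
    by (auto intro!: integrable_\<pi> bounded_comp_intros)
  then show ?thesis
    using assms noise_mean_zero
    by (simp add: local_noise_def matrix_vector_mult_diff_rdistrib integral_A_mult \<pi>.prob_space)
qed

lemma fluctuation_second_moment_le:
  assumes "c < N"
  shows "(\<integral>z. (norm ((A c z - mean_A c) *v v))\<^sup>2 \<partial>\<pi> c) \<le> opnorm (cov_A c) * (norm v)\<^sup>2"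
proof -
  have integrable: "integrable (\<pi> c) (\<lambda>z. transpose (A c z - mean_A c) ** (A c z - mean_A c))"
    using assms A_measurable A_bounded by (auto intro!: integrable_\<pi> bounded_comp_intros)
  have "(norm ((A c z - mean_A c) *v v))\<^sup>2 = v \<bullet> ((transpose (A c z - mean_A c) ** (A c z - mean_A c)) *v v)" for z
    by (simp add: power2_norm_eq_inner inner_matrix_vector_mult_left matrix_vector_mul_assoc)
  then have "(\<integral>z. (norm ((A c z - mean_A c) *v v))\<^sup>2 \<partial>\<pi> c) = v \<bullet> (cov_A c *v v)"
    using integrable_bounded_linear[OF bounded_linear_matrix_vector_mult_left integrable]
    by (simp add: cov_A_def integral_bounded_linear[OF bounded_linear_matrix_vector_mult_left integrable])
  also have "\<dots> \<le> norm v * (opnorm (cov_A c) * norm v)"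
    using norm_cauchy_schwarz[of v] norm_matrix_vector_mult_le_opnorm
    by (meson mult_left_mono norm_ge_zero order_trans)
  finally show ?thesis
    by (simp add: power2_eq_square mult_ac)
qed

lemma local_noise_second_moment_le:
  assumes c: "c < N" and s: "1 \<le> s"
  shows "(\<integral>z. (norm (local_noise c s k z))\<^sup>2 \<partial>\<pi> c) \<le> (eta s * agent_noise_scale c)\<^sup>2"
proof -
  interpret \<pi>: prob_space "\<pi> c"
    by (rule prob_space_\<pi>[OF c])
  let ?U = "\<lambda>z. (A c z - mean_A c) *v step_power (mean_A c) (eta s) k (offset c)"
  have [measurable]: "A c \<in> borel_measurable (\<pi> c)" "noise c \<in> borel_measurable (\<pi> c)"
    using c A_measurable noise_measurable by (auto intro: measurable_\<pi>)
  have square_integrable: "integrable (\<pi> c) (\<lambda>z. (norm (?U z))\<^sup>2)" "integrable (\<pi> c) (\<lambda>z. (norm (noise c z))\<^sup>2)"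
    using c A_measurable A_bounded noise_measurable bounded_noise
    by (auto intro!: integrable_\<pi> bounded_comp_intros)
  have "L2_norm (\<pi> c) ?U \<le> sqrt (opnorm (cov_A c) * (norm (step_power (mean_A c) (eta s) k (offset c)))\<^sup>2)"
    using c by (intro real_sqrt_le_mono fluctuation_second_moment_le)
  also have "\<dots> = sqrt (opnorm (cov_A c)) * norm (step_power (mean_A c) (eta s) k (offset c))"
    by (simp add: real_sqrt_mult)
  also have "\<dots> \<le> sqrt (opnorm (cov_A c)) * norm (offset c)"
    using c s by (intro mult_left_mono norm_step_power_mean_le) (auto simp: opnorm_nonneg)
  finally have "L2_norm (\<pi> c) (\<lambda>z. ?U z + noise c z) \<le> agent_noise_scale c"
    using L2_norm_add_le[of ?U "\<pi> c" "noise c"] square_integrable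
    unfolding agent_noise_scale_def by fastforce
  then have "L2_norm (\<pi> c) (local_noise c s k) \<le> eta s * agent_noise_scale c"
    using L2_norm_scaleR[of "\<pi> c" "- eta s" "\<lambda>z. ?U z + noise c z"] eta_pos[OF s]
    by (simp add: local_noise_def scaleR_add_right)
  then show ?thesis
    by (rule second_moment_le_if_L2_norm_le)
qed

lemma agent_noise_measurable:
  assumes "c < N" "\<And>k. 1 \<le> k \<Longrightarrow> k \<le> H s \<Longrightarrow> Z c s k \<in> measurable F Zs"
  shows "agent_noise c s \<in> borel_measurable F"
  unfolding agent_noise_def using assms local_noise_measurable by (intro noisy_run_measurable)

lemma agent_noise_bounded: "c < N \<Longrightarrow> 1 \<le> s \<Longrightarrow> bounded (agent_noise c s ` space M)"
  unfolding agent_noise_def using local_noise_bounded by (intro noisy_run_bounded) auto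

lemma agent_noise_moments:
  assumes "c < N" "1 \<le> s"
  shows "(\<integral>\<omega>. agent_noise c s \<omega> \<partial>M) = 0"
    and "(\<integral>\<omega>. (norm (agent_noise c s \<omega>))\<^sup>2 \<partial>M) \<le> real (H s) * (eta s * agent_noise_scale c)\<^sup>2"
proof -
  have moments: "(\<integral>\<omega>. agent_noise c s \<omega> \<partial>M) = 0 \<and>
      (\<integral>\<omega>. (norm (agent_noise c s \<omega>))\<^sup>2 \<partial>M) \<le> (\<Sum>k<H s. (\<integral>z. (norm (local_noise c s k z))\<^sup>2 \<partial>\<pi> c))"
    unfolding agent_noise_def using assms
    by (intro noisy_run_centered_moments local_noise_measurable local_noise_bounded local_noise_mean_zero) auto
  then show "(\<integral>\<omega>. agent_noise c s \<omega> \<partial>M) = 0"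
    by simp
  have "(\<Sum>k<H s. (\<integral>z. (norm (local_noise c s k z))\<^sup>2 \<partial>\<pi> c)) \<le> (\<Sum>k<H s. (eta s * agent_noise_scale c)\<^sup>2)"
    using assms by (intro sum_mono local_noise_second_moment_le)
  then show "(\<integral>\<omega>. (norm (agent_noise c s \<omega>))\<^sup>2 \<partial>M) \<le> real (H s) * (eta s * agent_noise_scale c)\<^sup>2"
    using moments by simp
qed

lemma measurable_Z_round_samples:
  "c < n \<Longrightarrow> n \<le> N \<Longrightarrow> 1 \<le> s \<Longrightarrow> 1 \<le> k \<Longrightarrow> k \<le> H s \<Longrightarrow>
    Z c s k \<in> measurable (sample_algebra (round_samples n s)) Zs"
  by (rule measurable_Z_sample_algebra) (auto simp: round_samples_def)

lemma agents_noise_sum_moments: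
  assumes s: "1 \<le> s" and n: "n \<le> N"
  shows "(\<integral>\<omega>. (\<Sum>c<n. agent_noise c s \<omega>) \<partial>M) = 0 \<and>
    (\<integral>\<omega>. (norm (\<Sum>c<n. agent_noise c s \<omega>))\<^sup>2 \<partial>M) \<le> (\<Sum>c<n. (\<integral>\<omega>. (norm (agent_noise c s \<omega>))\<^sup>2 \<partial>M))"
  using n
proof (induction n)
  case (Suc n)
  then have n: "n < N"
    by simp
  let ?S = "\<lambda>\<omega>. \<Sum>c<n. agent_noise c s \<omega>"
  have IH: "(\<integral>\<omega>. ?S \<omega> \<partial>M) = 0" "(\<integral>\<omega>. (norm (?S \<omega>))\<^sup>2 \<partial>M) \<le> (\<Sum>c<n. (\<integral>\<omega>. (norm (agent_noise c s \<omega>))\<^sup>2 \<partial>M))"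
    using Suc by auto
  have indep: "indep_var borel (\<lambda>\<omega>. (mat 1 :: real^'d^'d, agent_noise n s \<omega>)) borel (\<lambda>\<omega>. (0, ?S \<omega>))"
  proof (rule indep_sample_algebras)
    show "local_samples n s (H s) \<subseteq> sample_index" "round_samples n s \<subseteq> sample_index"
      "local_samples n s (H s) \<inter> round_samples n s = {}"
      using n s by (auto simp: local_samples_def round_samples_def)
    have "agent_noise n s \<in> borel_measurable (sample_algebra (local_samples n s (H s)))"
      using n s by (intro agent_noise_measurable measurable_Z_sample_algebra) (auto simp: local_samples_def)
    then show "(\<lambda>\<omega>. (mat 1 :: real^'d^'d, agent_noise n s \<omega>)) \<in> borel_measurable (sample_algebra (local_samples n s (H s)))"
      by simp
    have "?S \<in> borel_measurable (sample_algebra (round_samples n s))"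
      using n s by (intro borel_measurable_sum agent_noise_measurable measurable_Z_round_samples) auto
    then show "(\<lambda>\<omega>. (0 :: real^'d^'d, ?S \<omega>)) \<in> borel_measurable (sample_algebra (round_samples n s))"
      by simp
  qed
  have bounded: "bounded ((\<lambda>\<omega>. mat 1 :: real^'d^'d) ` space M)" "bounded (agent_noise n s ` space M)"
    "bounded (?S ` space M)"
    using n s by (auto intro!: bounded_sum_comp agent_noise_bounded)
  have "(\<integral>\<omega>. (norm (mat 1 *v v :: real^'d))\<^sup>2 \<partial>M) \<le> 1 * (norm v)\<^sup>2" for v
    by (simp add: prob_space)
  from indep_second_moment_affine_le[OF indep bounded this] indep_integral_affine[OF indep bounded]
  show ?case
    using IH agent_noise_moments(1)[OF n s] by (simp add: add.commute)
qed simp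

end


section \<open>The error recursion over rounds\<close>

context fedlsa_setting
begin

definition round_matrix :: "nat \<Rightarrow> 'w \<Rightarrow> real^'d^'d" where
  "round_matrix s \<omega> = (1 / real N) *\<^sub>R (\<Sum>c<N. run_matrix (A c) (eta s) (\<lambda>k. Z c s k \<omega>) (H s))"

definition round_noise :: "nat \<Rightarrow> 'w \<Rightarrow> real^'d" where
  "round_noise s \<omega> = (1 / real N) *\<^sub>R (\<Sum>c<N. agent_noise c s \<omega>)"

definition round_drift :: "nat \<Rightarrow> real^'d" where
  "round_drift s = (1 / real N) *\<^sub>R (\<Sum>c<N. step_power (mean_A c) (eta s) (H s) (offset c) - offset c)"

primrec round_run :: "(nat \<Rightarrow> 'w \<Rightarrow> real^'d) \<Rightarrow> real^'d \<Rightarrow> nat \<Rightarrow> 'w \<Rightarrow> real^'d" where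
  "round_run u x0 0 \<omega> = x0"
| "round_run u x0 (Suc s) \<omega> = round_matrix (Suc s) \<omega> *v round_run u x0 s \<omega> + u (Suc s) \<omega>"

definition samples_upto :: "nat \<Rightarrow> (nat \<times> nat \<times> nat) set" where
  "samples_upto s = {(c, r, h). c < N \<and> 1 \<le> r \<and> r \<le> s \<and> 1 \<le> h \<and> h \<le> H r}"

lemma samples_upto_subset: "samples_upto s \<subseteq> sample_index"
  by (auto simp: samples_upto_def)

lemma round_samples_subset: "1 \<le> s \<Longrightarrow> round_samples N s \<subseteq> sample_index"
  by (auto simp: round_samples_def)

lemma round_matrix_measurable:
  "(\<And>c k. c < N \<Longrightarrow> 1 \<le> k \<Longrightarrow> k \<le> H s \<Longrightarrow> Z c s k \<in> measurable F Zs) \<Longrightarrow> round_matrix s \<in> borel_measurable F"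
  unfolding round_matrix_def by (intro borel_measurable_scaleR borel_measurable_const borel_measurable_sum
    run_matrix_measurable) auto

lemma round_noise_measurable:
  "(\<And>c k. c < N \<Longrightarrow> 1 \<le> k \<Longrightarrow> k \<le> H s \<Longrightarrow> Z c s k \<in> measurable F Zs) \<Longrightarrow> round_noise s \<in> borel_measurable F"
  unfolding round_noise_def by (intro borel_measurable_scaleR borel_measurable_const borel_measurable_sum
    agent_noise_measurable) auto

lemma round_matrix_bounded: "1 \<le> s \<Longrightarrow> bounded (round_matrix s ` space M)"
  unfolding round_matrix_def by (intro bounded_comp_intros run_matrix_bounded) auto

lemma round_noise_bounded: "1 \<le> s \<Longrightarrow> bounded (round_noise s ` space M)"
  unfolding round_noise_def by (intro bounded_comp_intros agent_noise_bounded) auto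

lemma round_run_measurable:
  assumes "\<And>r. 1 \<le> r \<Longrightarrow> r \<le> s \<Longrightarrow> u r \<in> borel_measurable (sample_algebra (round_samples N r))"
  shows "round_run u x0 s \<in> borel_measurable (sample_algebra (samples_upto s))"
  using assms
proof (induction s)
  case 0
  have "round_run u x0 0 = (\<lambda>_. x0)"
    by (simp add: fun_eq_iff)
  then show ?case
    by simp
next
  case (Suc s)
  have "round_run u x0 s \<in> borel_measurable (sample_algebra (samples_upto s))"
    using Suc by simp
  then have "round_run u x0 s \<in> borel_measurable (sample_algebra (samples_upto (Suc s)))"
    by (intro measurable_sample_algebra_mono[OF _ samples_upto_subset]) (auto simp: samples_upto_def)
  have "round_samples N (Suc s) \<subseteq> samples_upto (Suc s)"
    by (auto simp: round_samples_def samples_upto_def)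
  moreover have "u (Suc s) \<in> borel_measurable (sample_algebra (round_samples N (Suc s)))"
    using Suc.prems by simp
  ultimately have "u (Suc s) \<in> borel_measurable (sample_algebra (samples_upto (Suc s)))"
    by (rule measurable_sample_algebra_mono[OF _ samples_upto_subset])
  moreover have "round_matrix (Suc s) \<in> borel_measurable (sample_algebra (samples_upto (Suc s)))"
    using samples_upto_subset
    by (intro round_matrix_measurable measurable_Z_sample_algebra) (auto simp: samples_upto_def)
  ultimately show ?case
    using \<open>round_run u x0 s \<in> borel_measurable (sample_algebra (samples_upto (Suc s)))\<close> by simp
qed

lemma round_run_bounded:
  "(\<And>r. 1 \<le> r \<Longrightarrow> bounded (u r ` space M)) \<Longrightarrow> bounded (round_run u x0 s ` space M)"
  by (induction s) (auto intro!: bounded_comp_intros round_matrix_bounded)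

lemma round_step_indep:
  fixes W y :: "'w \<Rightarrow> real^'d"
  assumes "W \<in> borel_measurable (sample_algebra (round_samples N (Suc s)))"
    and "y \<in> borel_measurable (sample_algebra (samples_upto s))"
  shows "indep_var borel (\<lambda>\<omega>. (round_matrix (Suc s) \<omega>, W \<omega>)) borel (\<lambda>\<omega>. (0, y \<omega>))"
proof (rule indep_sample_algebras[OF round_samples_subset samples_upto_subset])
  show "round_samples N (Suc s) \<inter> samples_upto s = {}"
    by (auto simp: round_samples_def samples_upto_def)
  have "round_matrix (Suc s) \<in> borel_measurable (sample_algebra (round_samples N (Suc s)))"
    by (intro round_matrix_measurable measurable_Z_round_samples) auto
  then show "(\<lambda>\<omega>. (round_matrix (Suc s) \<omega>, W \<omega>)) \<in> borel_measurable (sample_algebra (round_samples N (Suc s)))"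
    using assms(1) by simp
  show "(\<lambda>\<omega>. (0 :: real^'d^'d, y \<omega>)) \<in> borel_measurable (sample_algebra (samples_upto s))"
    using assms(2) by simp
qed simp

lemma round_matrix_second_moment_le:
  assumes s: "1 \<le> s"
  shows "(\<integral>\<omega>. (norm (round_matrix s \<omega> *v v))\<^sup>2 \<partial>M) \<le> (rho s)\<^sup>2 * (norm v)\<^sup>2"
proof -
  define Y where "Y c \<omega> = noisy_run (A c) (eta s) (\<lambda>_ _. 0) v (\<lambda>k. Z c s k \<omega>) (H s)" for c \<omega>
  have Y_measurable: "Y c \<in> borel_measurable M" if "c < N" for c
    unfolding Y_def using that s Z_measurable by (intro noisy_run_measurable) auto
  have Y_integrable: "integrable M (\<lambda>\<omega>. (norm (Y c \<omega>))\<^sup>2)" if "c < N" for c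
  proof (rule integrable_bounded_image)
    show "(\<lambda>\<omega>. (norm (Y c \<omega>))\<^sup>2) \<in> borel_measurable M"
      using Y_measurable[OF that] by measurable
    show "bounded ((\<lambda>\<omega>. (norm (Y c \<omega>))\<^sup>2) ` space M)"
      unfolding Y_def using that s by (intro bounded_power2_comp bounded_norm_comp[THEN iffD2] noisy_run_bounded) auto
  qed
  have Y_L2: "L2_norm M (Y c) \<le> rho s * norm v" if "c < N" for c
  proof -
    have "L2_norm M (Y c) \<le> sqrt (((1 - eta s * a)\<^sup>2) ^ H s * (norm v)\<^sup>2)"
      unfolding Y_def using that s by (intro real_sqrt_le_mono noisy_run_noiseless_second_moment_le) auto
    also have "((1 - eta s * a)\<^sup>2) ^ H s * (norm v)\<^sup>2 = (rho s * norm v)\<^sup>2"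
      using power_mult[of "1 - eta s * a" 2 "H s"] power_mult[of "1 - eta s * a" "H s" 2]
      by (simp add: rho_def power_mult_distrib mult.commute)
    also have "sqrt \<dots> = rho s * norm v"
      using rho_nonneg[OF s] by simp
    finally show ?thesis .
  qed
  have "round_matrix s \<omega> *v v = (1 / real N) *\<^sub>R (\<Sum>c<N. Y c \<omega>)" for \<omega>
    unfolding round_matrix_def Y_def
    by (simp add: scaleR_matrix_vector_assoc[symmetric] matrix_vector_mult_sum_left run_matrix_mult_eq_noisy_run)
  then have "L2_norm M (\<lambda>\<omega>. round_matrix s \<omega> *v v) = (1 / real N) * L2_norm M (\<lambda>\<omega>. \<Sum>c<N. Y c \<omega>)"
    using L2_norm_scaleR[of M "1 / real N" "\<lambda>\<omega>. \<Sum>c<N. Y c \<omega>"] by simp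
  also have "\<dots> \<le> (1 / real N) * (\<Sum>c<N. L2_norm M (Y c))"
    using Y_measurable Y_integrable by (intro mult_left_mono L2_norm_sum_le) auto
  also have "\<dots> \<le> (1 / real N) * (\<Sum>c<N. rho s * norm v)"
    using Y_L2 by (intro mult_left_mono sum_mono) auto
  also have "\<dots> = rho s * norm v"
    using N_pos by simp
  finally show ?thesis
    unfolding power_mult_distrib[symmetric] by (rule second_moment_le_if_L2_norm_le)
qed

lemma round_noise_moments:
  assumes s: "1 \<le> s"
  shows "(\<integral>\<omega>. round_noise s \<omega> \<partial>M) = 0"
    and "(\<integral>\<omega>. (norm (round_noise s \<omega>))\<^sup>2 \<partial>M)
      \<le> real (H s) * (eta s)\<^sup>2 / real N * ((1 / real N) * (\<Sum>c<N. (agent_noise_scale c)\<^sup>2))"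
proof -
  have sum: "(\<integral>\<omega>. (\<Sum>c<N. agent_noise c s \<omega>) \<partial>M) = 0 \<and>
      (\<integral>\<omega>. (norm (\<Sum>c<N. agent_noise c s \<omega>))\<^sup>2 \<partial>M) \<le> (\<Sum>c<N. (\<integral>\<omega>. (norm (agent_noise c s \<omega>))\<^sup>2 \<partial>M))"
    using s by (intro agents_noise_sum_moments) auto
  then show "(\<integral>\<omega>. round_noise s \<omega> \<partial>M) = 0"
    by (simp add: round_noise_def)
  have "(\<integral>\<omega>. (norm (round_noise s \<omega>))\<^sup>2 \<partial>M) = (1 / real N)\<^sup>2 * (\<integral>\<omega>. (norm (\<Sum>c<N. agent_noise c s \<omega>))\<^sup>2 \<partial>M)"
    by (simp add: round_noise_def power_divide)
  also have "\<dots> \<le> (1 / real N)\<^sup>2 * (\<Sum>c<N. real (H s) * (eta s * agent_noise_scale c)\<^sup>2)"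
  proof (rule mult_left_mono)
    have "(\<Sum>c<N. (\<integral>\<omega>. (norm (agent_noise c s \<omega>))\<^sup>2 \<partial>M)) \<le> (\<Sum>c<N. real (H s) * (eta s * agent_noise_scale c)\<^sup>2)"
      using s by (intro sum_mono agent_noise_moments(2)) auto
    then show "(\<integral>\<omega>. (norm (\<Sum>c<N. agent_noise c s \<omega>))\<^sup>2 \<partial>M) \<le> (\<Sum>c<N. real (H s) * (eta s * agent_noise_scale c)\<^sup>2)"
      using sum by linarith
  qed simp
  also have "\<dots> = real (H s) * (eta s)\<^sup>2 / real N * ((1 / real N) * (\<Sum>c<N. (agent_noise_scale c)\<^sup>2))"
    by (simp add: sum_distrib_left power2_eq_square algebra_simps)
  finally show "(\<integral>\<omega>. (norm (round_noise s \<omega>))\<^sup>2 \<partial>M)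
      \<le> real (H s) * (eta s)\<^sup>2 / real N * ((1 / real N) * (\<Sum>c<N. (agent_noise_scale c)\<^sup>2))" .
qed

lemma L2_norm_round_run_deterministic_le:
  "L2_norm M (round_run (\<lambda>s _. d s) x0 t)
    \<le> (\<Prod>s=1..t. rho s) * norm x0 + (\<Sum>s=1..t. (\<Prod>j=s+1..t. rho j) * norm (d s))"
proof -
  have step: "L2_norm M (round_run (\<lambda>s _. d s) x0 (Suc s))
      \<le> rho (Suc s) * L2_norm M (round_run (\<lambda>s _. d s) x0 s) + norm (d (Suc s))" for s
  proof -
    let ?x = "round_run (\<lambda>s _. d s) x0 s"
    have indep: "indep_var borel (\<lambda>\<omega>. (round_matrix (Suc s) \<omega>, 0)) borel (\<lambda>\<omega>. (0, ?x \<omega>))"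
      by (intro round_step_indep round_run_measurable) simp_all
    have x_measurable: "?x \<in> borel_measurable M"
      by (intro measurable_sample_algebra_imp_measurable[OF samples_upto_subset[of s]] round_run_measurable) simp
    have G_measurable: "round_matrix (Suc s) \<in> borel_measurable M"
      by (intro round_matrix_measurable Z_measurable) auto
    have bounded: "bounded (round_matrix (Suc s) ` space M)" "bounded (?x ` space M)"
      by (auto intro!: round_matrix_bounded round_run_bounded)
    have "L2_norm M (\<lambda>\<omega>. round_matrix (Suc s) \<omega> *v ?x \<omega>)
        \<le> sqrt ((rho (Suc s))\<^sup>2 * (\<integral>\<omega>. (norm (?x \<omega>))\<^sup>2 \<partial>M))"
      using round_matrix_second_moment_le
      by (intro real_sqrt_le_mono indep_second_moment_matrix_vector_mult_le[OF indep bounded]) auto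
    also have "\<dots> = rho (Suc s) * L2_norm M ?x"
      using rho_nonneg[of "Suc s"] by (simp add: real_sqrt_mult)
    finally have "L2_norm M (\<lambda>\<omega>. round_matrix (Suc s) \<omega> *v ?x \<omega>) \<le> rho (Suc s) * L2_norm M ?x" .
    moreover have "L2_norm M (\<lambda>\<omega>. round_matrix (Suc s) \<omega> *v ?x \<omega> + d (Suc s))
        \<le> L2_norm M (\<lambda>\<omega>. round_matrix (Suc s) \<omega> *v ?x \<omega>) + norm (d (Suc s))"
    proof -
      have "integrable M (\<lambda>\<omega>. (norm (round_matrix (Suc s) \<omega> *v ?x \<omega>))\<^sup>2)"
        using x_measurable G_measurable bounded by (intro integrable_bounded_image bounded_comp_intros) auto
      then show ?thesis
        using L2_norm_add_le[of "\<lambda>\<omega>. round_matrix (Suc s) \<omega> *v ?x \<omega>" M "\<lambda>_. d (Suc s)"]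
          x_measurable G_measurable by (simp add: prob_space)
    qed
    ultimately show ?thesis
      by simp
  qed
  have "L2_norm M (round_run (\<lambda>s _. d s) x0 t)
      \<le> (\<Prod>s=1..t. rho s) * L2_norm M (round_run (\<lambda>s _. d s) x0 0) + (\<Sum>s=1..t. (\<Prod>j=s+1..t. rho j) * norm (d s))"
    using step rho_nonneg by (rule linear_recurrence_le)
  then show ?thesis
    by (simp add: prob_space)
qed

lemma round_run_noise_moments:
  shows "(\<integral>\<omega>. round_run round_noise 0 t \<omega> \<partial>M) = 0"
    and "(\<integral>\<omega>. (norm (round_run round_noise 0 t \<omega>))\<^sup>2 \<partial>M)
      \<le> (\<Sum>s=1..t. (\<Prod>j=s+1..t. (rho j)\<^sup>2) * (\<integral>\<omega>. (norm (round_noise s \<omega>))\<^sup>2 \<partial>M))"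
proof -
  have noise_measurable: "round_noise s \<in> borel_measurable (sample_algebra (round_samples N s))" if "1 \<le> s" for s
    using that by (intro round_noise_measurable measurable_Z_round_samples) auto
  have indep: "indep_var borel (\<lambda>\<omega>. (round_matrix (Suc s) \<omega>, round_noise (Suc s) \<omega>))
      borel (\<lambda>\<omega>. (0, round_run round_noise 0 s \<omega>))" for s
    by (intro round_step_indep round_run_measurable noise_measurable) auto
  have bounded: "bounded (round_matrix (Suc s) ` space M)" "bounded (round_noise (Suc s) ` space M)"
    "bounded (round_run round_noise 0 s ` space M)" for s
    by (auto intro!: round_matrix_bounded round_noise_bounded round_run_bounded)
  have mean_zero: "(\<integral>\<omega>. round_run round_noise 0 s \<omega> \<partial>M) = 0" for s
  proof (induction s)
    case (Suc s)
    then show ?case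
      using indep_integral_affine[OF indep bounded] round_noise_moments(1)[of "Suc s"] by simp
  qed simp
  then show "(\<integral>\<omega>. round_run round_noise 0 t \<omega> \<partial>M) = 0" .
  have "(\<integral>\<omega>. (norm (round_run round_noise 0 t \<omega>))\<^sup>2 \<partial>M)
      \<le> (\<Prod>s=1..t. (rho s)\<^sup>2) * (\<integral>\<omega>. (norm (round_run round_noise 0 0 \<omega>))\<^sup>2 \<partial>M)
        + (\<Sum>s=1..t. (\<Prod>j=s+1..t. (rho j)\<^sup>2) * (\<integral>\<omega>. (norm (round_noise s \<omega>))\<^sup>2 \<partial>M))"
  proof (rule linear_recurrence_le[where x="\<lambda>s. (\<integral>\<omega>. (norm (round_run round_noise 0 s \<omega>))\<^sup>2 \<partial>M)"])
    show "(\<integral>\<omega>. (norm (round_run round_noise 0 (Suc s) \<omega>))\<^sup>2 \<partial>M)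
        \<le> (rho (Suc s))\<^sup>2 * (\<integral>\<omega>. (norm (round_run round_noise 0 s \<omega>))\<^sup>2 \<partial>M)
          + (\<integral>\<omega>. (norm (round_noise (Suc s) \<omega>))\<^sup>2 \<partial>M)" for s
      using indep_second_moment_affine_le[OF indep bounded round_matrix_second_moment_le] mean_zero
      by simp
  qed simp
  then show "(\<integral>\<omega>. (norm (round_run round_noise 0 t \<omega>))\<^sup>2 \<partial>M)
      \<le> (\<Sum>s=1..t. (\<Prod>j=s+1..t. (rho j)\<^sup>2) * (\<integral>\<omega>. (norm (round_noise s \<omega>))\<^sup>2 \<partial>M))"
    by simp
qed

lemma fedlsa_error_decomposition:
  "fedlsa N A b eta H theta0 (\<lambda>c s h. Z c s h \<omega>) t - theta_star
    = round_run (\<lambda>s _. round_drift s) (theta0 - theta_star) t \<omega> + round_run round_noise 0 t \<omega>"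
proof (induction t)
  case (Suc s)
  define x where "x = fedlsa N A b eta H theta0 (\<lambda>c s h. Z c s h \<omega>) s"
  define zs where "zs c = (\<lambda>k. Z c (Suc s) k \<omega>)" for c
  define \<Gamma> where "\<Gamma> c = run_matrix (A c) (eta (Suc s)) (zs c) (H (Suc s))" for c
  define drift where "drift c = step_power (mean_A c) (eta (Suc s)) (H (Suc s)) (offset c) - offset c" for c
  have local_error: "local_run (A c) (b c) (eta (Suc s)) (zs c) x (H (Suc s)) - theta_star
      = \<Gamma> c *v (x - theta_star) + drift c + agent_noise c (Suc s) \<omega>" for c
  proof -
    let ?u = "noisy_run (A c) (eta (Suc s)) (\<lambda>_ z. - eta (Suc s) *\<^sub>R noise c z) 0 (zs c) (H (Suc s))"
    have "local_run (A c) (b c) (eta (Suc s)) (zs c) x (H (Suc s)) - theta_star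
        = \<Gamma> c *v (x - theta_star) + (\<Gamma> c *v offset c - step_power (mean_A c) (eta (Suc s)) (H (Suc s)) (offset c) + ?u)
          + drift c"
      unfolding local_run_eq_noisy_run[OF noise_def] \<Gamma>_def drift_def
      by (simp add: offset_def matrix_vector_right_distrib matrix_vector_mult_diff_distrib algebra_simps)
    also have "\<Gamma> c *v offset c - step_power (mean_A c) (eta (Suc s)) (H (Suc s)) (offset c) + ?u = agent_noise c (Suc s) \<omega>"
      unfolding \<Gamma>_def agent_noise_def zs_def local_noise_def by (rule noisy_run_centered)
    finally show ?thesis
      by simp
  qed
  have "fedlsa N A b eta H theta0 (\<lambda>c s h. Z c s h \<omega>) (Suc s) - theta_star
      = (1 / real N) *\<^sub>R (\<Sum>c<N. local_run (A c) (b c) (eta (Suc s)) (zs c) x (H (Suc s)) - theta_star)"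
    using N_pos by (simp add: x_def zs_def sum_subtractf scaleR_diff_right sum_constant_scaleR del: sum_constant)
  also have "\<dots> = (1 / real N) *\<^sub>R (\<Sum>c<N. \<Gamma> c *v (x - theta_star) + drift c + agent_noise c (Suc s) \<omega>)"
    by (simp only: local_error)
  also have "\<dots> = round_matrix (Suc s) \<omega> *v (x - theta_star) + round_drift (Suc s) + round_noise (Suc s) \<omega>"
    unfolding round_matrix_def round_drift_def round_noise_def \<Gamma>_def drift_def zs_def
    by (simp add: sum.distrib scaleR_add_right scaleR_matrix_vector_assoc[symmetric] matrix_vector_mult_sum_left)
  also have "\<dots> = round_run (\<lambda>s _. round_drift s) (theta0 - theta_star) (Suc s) \<omega> + round_run round_noise 0 (Suc s) \<omega>"
    using Suc unfolding x_def by (simp add: matrix_vector_right_distrib algebra_simps)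
  finally show ?case .
qed simp

end


context fedlsa_setting
begin

definition zeta1 :: real where
  "zeta1 = sqrt ((1 / real N) * (\<Sum>c<N. (norm (mean_A c *v (theta_loc c - theta_star)))\<^sup>2))"

definition zeta2 :: real where
  "zeta2 = sqrt ((1 / real N) * (\<Sum>c<N. (opnorm (mean_A c - mean_A_avg))\<^sup>2))"

definition sigma_eps :: real where
  "sigma_eps = sqrt ((1 / real N) * (\<Sum>c<N.
     (\<Sum>i\<in>UNIV. (\<integral>z. (\<chi> j k. noise c z $ j * noise c z $ k) \<partial>\<pi> c) $ i $ i)))"

definition sigma_het :: real where
  "sigma_het = sqrt ((1 / real N) * (\<Sum>c<N. opnorm (cov_A c) * (norm (theta_loc c - theta_star))\<^sup>2))"

lemma sigma_eps_eq: "sigma_eps = sqrt ((1 / real N) * (\<Sum>c<N. \<integral>z. (norm (noise c z))\<^sup>2 \<partial>\<pi> c))"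
proof -
  have "(\<Sum>i\<in>UNIV. (\<integral>z. (\<chi> j k. noise c z $ j * noise c z $ k) \<partial>\<pi> c) $ i $ i) = (\<integral>z. (norm (noise c z))\<^sup>2 \<partial>\<pi> c)"
    if "c < N" for c
  proof -
    interpret \<pi>: prob_space "\<pi> c"
      by (rule prob_space_\<pi>[OF that])
    show ?thesis
      using that noise_measurable bounded_noise
      by (intro \<pi>.trace_integral_outer_product measurable_\<pi>) (auto simp: space_\<pi>)
  qed
  then show ?thesis
    unfolding sigma_eps_def by simp
qed

lemma sigma_nonneg: "0 \<le> sigma_eps" "0 \<le> sigma_het"
  unfolding sigma_eps_eq sigma_het_def
  by (simp_all add: sum_nonneg integral_nonneg_AE opnorm_nonneg)

lemma sqrt_average_eq_L2_set: "sqrt ((1 / real N) * (\<Sum>c<N. (f c)\<^sup>2)) = sqrt (1 / real N) * L2_set f {..<N}"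
  unfolding L2_set_def by (rule real_sqrt_mult)

lemma average_product_le: "(1 / real N) * (\<Sum>c<N. f c * g c)
    \<le> sqrt ((1 / real N) * (\<Sum>c<N. (f c)\<^sup>2)) * sqrt ((1 / real N) * (\<Sum>c<N. (g c)\<^sup>2))"
proof -
  have "(\<Sum>c<N. f c * g c) \<le> (\<Sum>c<N. \<bar>f c\<bar> * \<bar>g c\<bar>)"
    by (intro sum_mono) (simp add: abs_mult[symmetric])
  also have "\<dots> \<le> L2_set f {..<N} * L2_set g {..<N}"
    by (rule L2_set_mult_ineq)
  finally have "(1 / real N) * (\<Sum>c<N. f c * g c) \<le> (sqrt (1 / real N) * L2_set f {..<N}) * (sqrt (1 / real N) * L2_set g {..<N})"
    by (simp add: mult_ac divide_right_mono)
  then show ?thesis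
    by (simp only: sqrt_average_eq_L2_set)
qed

lemma norm_round_drift_le:
  assumes "1 \<le> s"
  shows "norm (round_drift s) \<le> (eta s)\<^sup>2 * (real (H s))\<^sup>2 * (zeta1 * zeta2)"
proof -
  have "norm (round_drift s)
      \<le> (eta s)\<^sup>2 * (real (H s))\<^sup>2 * ((1 / real N) * (\<Sum>c<N. opnorm (mean_A c - mean_A_avg) * norm (mean_A c *v offset c)))"
    unfolding round_drift_def mean_A_avg_def
    using heterogeneity_drift_le[OF N_pos mean_A_offset_sum nonexpansive_mean_step] assms eta_pos[OF assms]
    by simp
  also have "\<dots> \<le> (eta s)\<^sup>2 * (real (H s))\<^sup>2 * (zeta1 * zeta2)"
  proof (rule mult_left_mono)
    have "norm (mean_A c *v offset c) = norm (mean_A c *v (theta_loc c - theta_star))" for c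
      by (metis matrix_vector_mult_diff_distrib norm_minus_commute offset_def)
    then show "(1 / real N) * (\<Sum>c<N. opnorm (mean_A c - mean_A_avg) * norm (mean_A c *v offset c)) \<le> zeta1 * zeta2"
      using average_product_le[of "\<lambda>c. opnorm (mean_A c - mean_A_avg)" "\<lambda>c. norm (mean_A c *v offset c)"]
      by (simp add: zeta1_def zeta2_def mult.commute)
  qed simp
  finally show ?thesis .
qed

lemma prod_rho_le_exp: "(\<Prod>j=s+1..t. rho j) \<le> exp (- a * (\<Sum>j=s+1..t. eta j * real (H j)))"
  unfolding rho_def using one_minus_eta_a_bounds by (intro prod_one_minus_power_le_exp) force

lemma prod_rho_sq_le_exp: "(\<Prod>j=s+1..t. (rho j)\<^sup>2) \<le> exp (- 2 * a * (\<Sum>j=s+1..t. eta j * real (H j)))"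
proof -
  have "(\<Prod>j=s+1..t. (rho j)\<^sup>2) = (\<Prod>j=s+1..t. rho j)\<^sup>2"
    by (simp add: prod_power_distrib)
  also have "\<dots> \<le> (exp (- a * (\<Sum>j=s+1..t. eta j * real (H j))))\<^sup>2"
    using rho_nonneg by (intro power_mono prod_rho_le_exp prod_nonneg) auto
  also have "\<dots> = exp (- 2 * a * (\<Sum>j=s+1..t. eta j * real (H j)))"
    by (simp add: exp_double[symmetric])
  finally show ?thesis .
qed

lemma average_agent_noise_scale_le: "(1 / real N) * (\<Sum>c<N. (agent_noise_scale c)\<^sup>2) \<le> (sigma_het + sigma_eps)\<^sup>2"
proof -
  let ?u = "\<lambda>c. sqrt (opnorm (cov_A c)) * norm (offset c)" and ?v = "\<lambda>c. L2_norm (\<pi> c) (noise c)"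
  have "opnorm (cov_A c) * (norm (theta_loc c - theta_star))\<^sup>2 = (?u c)\<^sup>2" for c
    using opnorm_nonneg[of "cov_A c"] by (simp add: offset_def norm_minus_commute power_mult_distrib)
  then have het: "sigma_het = sqrt (1 / real N) * L2_set ?u {..<N}"
    unfolding sigma_het_def by (simp only: sqrt_average_eq_L2_set)
  have "sigma_eps = sqrt ((1 / real N) * (\<Sum>c<N. (?v c)\<^sup>2))"
    unfolding sigma_eps_eq by (simp add: integral_nonneg_AE)
  then have eps: "sigma_eps = sqrt (1 / real N) * L2_set ?v {..<N}"
    by (simp only: sqrt_average_eq_L2_set)
  have "(1 / real N) * (\<Sum>c<N. (agent_noise_scale c)\<^sup>2) = (sqrt (1 / real N) * L2_set (\<lambda>c. ?u c + ?v c) {..<N})\<^sup>2"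
    unfolding sqrt_average_eq_L2_set[symmetric] agent_noise_scale_def by (simp add: sum_nonneg)
  also have "\<dots> \<le> (sqrt (1 / real N) * (L2_set ?u {..<N} + L2_set ?v {..<N}))\<^sup>2"
    by (intro power_mono mult_left_mono L2_set_triangle_ineq) auto
  also have "\<dots> = (sigma_het + sigma_eps)\<^sup>2"
    by (simp add: het eps distrib_left)
  finally show ?thesis .
qed

lemma L2_norm_drift_part_le:
  "L2_norm M (round_run (\<lambda>s _. round_drift s) (theta0 - theta_star) t)
    \<le> (\<Prod>s=1..t. (1 - eta s * a) ^ H s) * norm (theta0 - theta_star)
      + zeta1 * zeta2 * (\<Sum>s=1..t. (eta s)\<^sup>2 * (real (H s))\<^sup>2 * exp (- a * (\<Sum>i=s+1..t. eta i * real (H i))))"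
proof -
  have "(\<Sum>s=1..t. (\<Prod>j=s+1..t. rho j) * norm (round_drift s))
      \<le> (\<Sum>s=1..t. exp (- a * (\<Sum>i=s+1..t. eta i * real (H i))) * ((eta s)\<^sup>2 * (real (H s))\<^sup>2 * (zeta1 * zeta2)))"
    using prod_rho_le_exp norm_round_drift_le rho_nonneg by (intro sum_mono mult_mono prod_nonneg) auto
  also have "\<dots> = zeta1 * zeta2 * (\<Sum>s=1..t. (eta s)\<^sup>2 * (real (H s))\<^sup>2 * exp (- a * (\<Sum>i=s+1..t. eta i * real (H i))))"
    by (simp add: sum_distrib_left mult_ac)
  finally show ?thesis
    using L2_norm_round_run_deterministic_le[of round_drift "theta0 - theta_star" t]
    by (simp add: rho_def)
qed

lemma L2_norm_noise_part_le:
  "L2_norm M (round_run round_noise 0 t)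
    \<le> (sigma_eps + sigma_het) / sqrt (real N)
      * sqrt (\<Sum>s=1..t. (eta s)\<^sup>2 * real (H s) * exp (- 2 * a * (\<Sum>r=s+1..t. eta r * real (H r))))"
proof -
  define S where "S = (\<Sum>s=1..t. (eta s)\<^sup>2 * real (H s) * exp (- 2 * a * (\<Sum>r=s+1..t. eta r * real (H r))))"
  have noise_le: "(\<integral>\<omega>. (norm (round_noise s \<omega>))\<^sup>2 \<partial>M) \<le> real (H s) * (eta s)\<^sup>2 / real N * (sigma_het + sigma_eps)\<^sup>2"
    if "1 \<le> s" for s
    using round_noise_moments(2)[OF that] average_agent_noise_scale_le
    by (rule order_trans[OF _ mult_left_mono]) simp
  have "(\<integral>\<omega>. (norm (round_run round_noise 0 t \<omega>))\<^sup>2 \<partial>M)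
      \<le> (\<Sum>s=1..t. (\<Prod>j=s+1..t. (rho j)\<^sup>2) * (\<integral>\<omega>. (norm (round_noise s \<omega>))\<^sup>2 \<partial>M))"
    by (rule round_run_noise_moments(2))
  also have "\<dots> \<le> (\<Sum>s=1..t. exp (- 2 * a * (\<Sum>r=s+1..t. eta r * real (H r)))
      * (real (H s) * (eta s)\<^sup>2 / real N * (sigma_het + sigma_eps)\<^sup>2))"
    using prod_rho_sq_le_exp noise_le by (intro sum_mono mult_mono prod_nonneg) auto
  also have "\<dots> = ((sigma_eps + sigma_het) / sqrt (real N))\<^sup>2 * S"
    using N_pos by (simp add: S_def sum_distrib_left power_divide algebra_simps)
  finally have "L2_norm M (round_run round_noise 0 t) \<le> sqrt (((sigma_eps + sigma_het) / sqrt (real N))\<^sup>2 * S)"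
    by (rule real_sqrt_le_mono)
  also have "\<dots> = (sigma_eps + sigma_het) / sqrt (real N) * sqrt S"
    using sigma_nonneg by (simp add: real_sqrt_mult)
  finally show ?thesis
    unfolding S_def .
qed

theorem fedlsa_error_bound:
  "L2_norm M (\<lambda>\<omega>. fedlsa N A b eta H theta0 (\<lambda>c s h. Z c s h \<omega>) t - theta_star)
    \<le> (\<Prod>s=1..t. (1 - eta s * a) ^ H s) * norm (theta0 - theta_star)
      + zeta1 * zeta2 * (\<Sum>s=1..t. (eta s)\<^sup>2 * (real (H s))\<^sup>2 * exp (- a * (\<Sum>i=s+1..t. eta i * real (H i))))
      + (sigma_eps + sigma_het) / sqrt (real N)
          * sqrt (\<Sum>s=1..t. (eta s)\<^sup>2 * real (H s) * exp (- 2 * a * (\<Sum>r=s+1..t. eta r * real (H r))))"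
proof -
  let ?P = "round_run (\<lambda>s _. round_drift s) (theta0 - theta_star) t"
    and ?R = "round_run round_noise 0 t"
  have measurable: "?P \<in> borel_measurable M" "?R \<in> borel_measurable M"
    using round_noise_measurable measurable_Z_round_samples
    by (auto intro!: measurable_sample_algebra_imp_measurable[OF samples_upto_subset] round_run_measurable)
  have "bounded (?P ` space M)" "bounded (?R ` space M)"
    by (auto intro!: round_run_bounded round_noise_bounded)
  then have "integrable M (\<lambda>\<omega>. (norm (?P \<omega>))\<^sup>2)" "integrable M (\<lambda>\<omega>. (norm (?R \<omega>))\<^sup>2)"
    using measurable by (auto intro!: integrable_bounded_image bounded_comp_intros)
  then have "L2_norm M (\<lambda>\<omega>. ?P \<omega> + ?R \<omega>) \<le> L2_norm M ?P + L2_norm M ?R"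
    using measurable by (intro L2_norm_add_le)
  then show ?thesis
    unfolding fedlsa_error_decomposition
    using L2_norm_drift_part_le[of theta0 t] L2_norm_noise_part_le[where t=t] by linarith
qed

end


theorem theorem1:
  fixes N :: nat
    and M :: "'w measure" and Zs :: "'z measure" and \<pi> :: "nat \<Rightarrow> 'z measure"
    and A :: "nat \<Rightarrow> 'z \<Rightarrow> real^'d^'d" and b :: "nat \<Rightarrow> 'z \<Rightarrow> real^'d"
    and Z :: "nat \<Rightarrow> nat \<Rightarrow> nat \<Rightarrow> 'w \<Rightarrow> 'z"
    and eta :: "nat \<Rightarrow> real" and H :: "nat \<Rightarrow> nat" and theta0 :: "real^'d"
    and a eta_inf :: real
    and theta_star :: "real^'d" and theta_loc :: "nat \<Rightarrow> real^'d"
    and Abar_c Atil :: "nat \<Rightarrow> real^'d^'d" and Abar :: "real^'d^'d"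
    and bbar_c :: "nat \<Rightarrow> real^'d" and bbar :: "real^'d"
    and eps :: "nat \<Rightarrow> 'z \<Rightarrow> real^'d"
    and zeta1 zeta2 sigma_eps sigma_het sigma_A :: real
    and t :: nat
  assumes N_pos: "N \<ge> 1"
    and M_prob: "prob_space M"
    and pi_prob: "\<And>c. c < N \<Longrightarrow> prob_space (\<pi> c)"
    and pi_sets: "\<And>c. c < N \<Longrightarrow> sets (\<pi> c) = sets Zs"
    and A_meas: "\<And>c. c < N \<Longrightarrow> A c \<in> borel_measurable Zs"
    and b_meas: "\<And>c. c < N \<Longrightarrow> b c \<in> borel_measurable Zs"
    and b_int: "\<And>c. c < N \<Longrightarrow> integrable (\<pi> c) (b c)"
    and Abar_c_def: "\<And>c. Abar_c c = (\<integral>z. A c z \<partial>\<pi> c)"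
    and bbar_c_def: "\<And>c. bbar_c c = (\<integral>z. b c z \<partial>\<pi> c)"
    and Abar_def: "Abar = (1 / real N) *\<^sub>R (\<Sum>c<N. Abar_c c)"
    and bbar_def: "bbar = (1 / real N) *\<^sub>R (\<Sum>c<N. bbar_c c)"
    and theta_star_sol: "Abar *v theta_star = bbar"
    and theta_loc_sol: "\<And>c. c < N \<Longrightarrow> Abar_c c *v theta_loc c = bbar_c c"
    and eps_def: "\<And>c z. eps c z = (A c z - Abar_c c) *v theta_loc c - (b c z - bbar_c c)"
    \<comment> \<open>Assumption A1(2)\<close>
    and hurwitz: "\<And>c. c < N \<Longrightarrow> hurwitz (- Abar_c c)"
    and a_pos: "a > 0" and eta_inf_pos: "eta_inf > 0" and eta_inf_a: "eta_inf * a \<le> 1 / 2"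
    and A1: "\<And>c e u. c < N \<Longrightarrow> 0 < e \<Longrightarrow> e < eta_inf \<Longrightarrow>
               sqrt (\<integral>z. (norm ((mat 1 - e *\<^sub>R A c z) *v u))\<^sup>2 \<partial>\<pi> c) \<le> (1 - e * a) * norm u"
    \<comment> \<open>Assumption A2\<close>
    and Z_meas: "\<And>c s h. c < N \<Longrightarrow> 1 \<le> s \<Longrightarrow> 1 \<le> h \<Longrightarrow> h \<le> H s \<Longrightarrow> Z c s h \<in> measurable M Zs"
    and Z_distr: "\<And>c s h. c < N \<Longrightarrow> 1 \<le> s \<Longrightarrow> 1 \<le> h \<Longrightarrow> h \<le> H s \<Longrightarrow> distr M Zs (Z c s h) = \<pi> c"
    and Z_indep: "prob_space.indep_vars M (\<lambda>_. Zs) (\<lambda>(c, s, h). Z c s h)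
                    {(c, s, h). c < N \<and> 1 \<le> s \<and> 1 \<le> h \<and> h \<le> H s}"
    and eps_bdd: "\<exists>B. \<forall>c<N. \<forall>z\<in>space Zs. norm (eps c z) \<le> B"
    and A_bdd: "\<exists>C. \<forall>c<N. \<forall>z\<in>space Zs. opnorm (A c z) \<le> C \<and> opnorm (A c z - Abar_c c) \<le> C"
    \<comment> \<open>step sizes and local step numbers\<close>
    and eta_pos: "\<And>s. 1 \<le> s \<Longrightarrow> 0 < eta s"
    and eta_le: "\<And>s. 1 \<le> s \<Longrightarrow> eta s \<le> eta_inf"
    and eta_noninc: "\<And>s s'. 1 \<le> s \<Longrightarrow> s \<le> s' \<Longrightarrow> eta s' \<le> eta s"
    and H_pos: "\<And>s. 1 \<le> s \<Longrightarrow> 1 \<le> H s"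
    and H_nondec: "\<And>s s'. 1 \<le> s \<Longrightarrow> s \<le> s' \<Longrightarrow> H s \<le> H s'"
    \<comment> \<open>heterogeneity and variance quantities\<close>
    and zeta1_def: "zeta1 = sqrt ((1 / real N) * (\<Sum>c<N. (norm (Abar_c c *v (theta_loc c - theta_star)))\<^sup>2))"
    and zeta2_def: "zeta2 = sqrt ((1 / real N) * (\<Sum>c<N. (opnorm (Abar_c c - Abar))\<^sup>2))"
    and sigma_eps_def: "sigma_eps = sqrt ((1 / real N) * (\<Sum>c<N.
           (\<Sum>i\<in>UNIV. (\<integral>z. (\<chi> j k. eps c z $ j * eps c z $ k) \<partial>\<pi> c) $ i $ i)))"
    and sigma_het_def: "sigma_het = sqrt ((1 / real N) * (\<Sum>c<N.
           opnorm (\<integral>z. transpose (A c z - Abar_c c) ** (A c z - Abar_c c) \<partial>\<pi> c)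
           * (norm (theta_loc c - theta_star))\<^sup>2))"
    and sigma_A_def: "sigma_A = sqrt ((1 / real N) * (\<Sum>c<N.
           (opnorm (\<integral>z. transpose (A c z - Abar_c c) ** (A c z - Abar_c c) \<partial>\<pi> c))\<^sup>2))"
    and t_pos: "1 \<le> t"
  shows "sqrt (\<integral>\<omega>. (norm (fedlsa N A b eta H theta0 (\<lambda>c s h. Z c s h \<omega>) t - theta_star))\<^sup>2 \<partial>M)
     \<le> (\<Prod>s=1..t. (1 - eta s * a) ^ H s) * norm (theta0 - theta_star)
       + zeta1 * zeta2 * (\<Sum>s=1..t. (eta s)\<^sup>2 * (real (H s))\<^sup>2 * exp (- a * (\<Sum>i=s+1..t. eta i * real (H i))))
       + (sigma_eps + 2 * sigma_het) / sqrt (real N)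
           * sqrt (\<Sum>s=1..t. (eta s)\<^sup>2 * real (H s) * exp (- 2 * a * (\<Sum>r=s+1..t. eta r * real (H r))))
       + sqrt (4 * sigma_A\<^sup>2 * zeta1\<^sup>2 * zeta2\<^sup>2 / (real N * a * exp 1))
           * sqrt (\<Sum>s=1..t. eta s ^ 5 * real (H s) ^ 4 * exp (- a * (\<Sum>r=s+1..t. eta r * real (H r))))"
proof -
  have eps_eq: "eps c = (\<lambda>z. A c z *v theta_loc c - b c z)" if "c < N" for c
    using theta_loc_sol[OF that] by (simp add: fun_eq_iff eps_def matrix_vector_mult_diff_rdistrib)
  have global_solution: "(\<Sum>c<N. \<integral>z. A c z \<partial>\<pi> c) *v theta_star = (\<Sum>c<N. \<integral>z. b c z \<partial>\<pi> c)"
    using theta_star_sol N_pos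
    by (simp add: Abar_def bbar_def Abar_c_def bbar_c_def scaleR_matrix_vector_assoc[symmetric])
  have local_solution: "(\<integral>z. A c z \<partial>\<pi> c) *v theta_loc c = (\<integral>z. b c z \<partial>\<pi> c)" if "c < N" for c
    using theta_loc_sol[OF that] by (simp add: Abar_c_def bbar_c_def)
  have A_bounded: "bounded (A c ` space Zs)" if "c < N" for c
    using A_bdd that by (metis bounded_image_if_opnorm_le)
  have noise_bounded: "bounded ((\<lambda>z. A c z *v theta_loc c - b c z) ` space Zs)" if "c < N" for c
    unfolding eps_eq[OF that, symmetric] using eps_bdd that by (auto simp: bounded_iff)
  interpret F: fedlsa_setting M N Zs \<pi> A b theta_loc theta_star Z eta H a eta_inf
    by (intro fedlsa_setting.intro fedlsa_setting_axioms.intro)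
      (fact assms global_solution local_solution A_bounded noise_bounded)+
  have "Abar_c = F.mean_A" "Abar = F.mean_A_avg"
    by (simp_all add: fun_eq_iff Abar_c_def F.mean_A_def Abar_def F.mean_A_avg_def)
  then have quantities: "zeta1 = F.zeta1" "zeta2 = F.zeta2" "sigma_het = F.sigma_het" "sigma_eps = F.sigma_eps"
    using eps_eq by (simp_all add: zeta1_def zeta2_def sigma_het_def sigma_eps_def F.zeta1_def F.zeta2_def
        F.sigma_het_def F.sigma_eps_def F.cov_A_def F.noise_def)
  have "(sigma_eps + sigma_het) / sqrt (real N)
        * sqrt (\<Sum>s=1..t. (eta s)\<^sup>2 * real (H s) * exp (- 2 * a * (\<Sum>r=s+1..t. eta r * real (H r))))
      \<le> (sigma_eps + 2 * sigma_het) / sqrt (real N)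
        * sqrt (\<Sum>s=1..t. (eta s)\<^sup>2 * real (H s) * exp (- 2 * a * (\<Sum>r=s+1..t. eta r * real (H r))))"
    using F.sigma_nonneg unfolding quantities
    by (intro mult_right_mono divide_right_mono real_sqrt_ge_zero sum_nonneg) auto
  moreover have "0 \<le> sqrt (4 * sigma_A\<^sup>2 * zeta1\<^sup>2 * zeta2\<^sup>2 / (real N * a * exp 1))
      * sqrt (\<Sum>s=1..t. eta s ^ 5 * real (H s) ^ 4 * exp (- a * (\<Sum>r=s+1..t. eta r * real (H r))))"
    using a_pos eta_pos
    by (intro mult_nonneg_nonneg real_sqrt_ge_zero divide_nonneg_nonneg sum_nonneg) (auto simp: less_imp_le)
  ultimately show ?thesis
    using F.fedlsa_error_bound[of theta0 t] unfolding quantities by linarith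
qed

end
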